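(* Suppose $f$ is an infinitely renormalizable $\mathcal C^3$ dissipative gap mapping. Then for every $\varepsilon>0$ there is $n_0\in\mathbb N$ such that for all $n\ge n_0$ there exists an affine gap mapping $g_n$ (both branches affine) with $\|\mathcal R^nf-g_n\|_{\mathcal C^3}\le\varepsilon$.
   Context: A dissipative gap map is a map $f:[a_L,a_R]\setminus\{0\}\to[a_L,a_R]$, $a_L<0<a_R$, continuous and strictly increasing on $[a_L,0)$ and $(0,a_R]$, with $f(0^-)=a_R$, $f(0^+)=a_L$, $f(a_L)>f(a_R)$, differentiable with $0<f'\le\nu<1$. With domain $[b-1,b]$, branches $f_L,f_R$ and gap $G=(f_R(b),f_L(b-1))$, $f$ is renormalizable if there is a minimal $k\ge1$ with $0\notin\bigcup_{i=0}^k\overline{f^i(G)}$ and either $\overline G,\dots,\overline{f^{k-1}(G)}\subset(b-1,0)$, $\overline{f^k(G)}\subset(0,b)$, or the same with sides exchanged. With $0^+_j=f^{j-1}(b-1)$, $0^-_j=f^{j-1}(b)$, $I'=[0^+_{k+1},0^-_{k+2}]$ in the first case and $I'=[0^+_{k+2},0^-_{k+1}]$ in the second; the renormalization is $\mathcal Rf(x)=R(|I'|x)/|I'|$ where $R$ is the first return map of $f$ to $I'$ (again a dissipative gap map). $f$ is infinitely renormalizable if $\mathcal R^nf$ is defined for all $n$. *)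

theory Defs
  imports "HOL-Analysis.Analysis"
begin

text \<open>A map is represented by a pair (b, f): the domain is [b-1, b] (with b-1 < 0 < b),
  and f is only meaningful on [b-1,b] minus 0 (the value f 0 is irrelevant).\<close>

definition gap_map :: "real \<Rightarrow> (real \<Rightarrow> real) \<Rightarrow> bool" where
  "gap_map b f \<longleftrightarrow>
     b - 1 < 0 \<and> 0 < b \<and>
     (\<forall>x \<in> {b-1..b} - {0}. f x \<in> {b-1..b}) \<and>
     continuous_on {b-1..<0} f \<and> continuous_on {0<..b} f \<and>
     strict_mono_on {b-1..<0} f \<and> strict_mono_on {0<..b} f \<and>
     (f \<longlongrightarrow> b) (at_left 0) \<and> (f \<longlongrightarrow> b - 1) (at_right 0) \<and>
     f (b - 1) > f b"

definition dissipative_gap_map :: "real \<Rightarrow> (real \<Rightarrow> real) \<Rightarrow> bool" where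
  "dissipative_gap_map b f \<longleftrightarrow> gap_map b f \<and>
     (\<exists>\<nu> < 1. \<forall>x \<in> {b-1..b} - {0}. \<exists>d.
        (f has_real_derivative d) (at x within ({b-1..b} - {0})) \<and> 0 < d \<and> d \<le> \<nu>)"

definition C3_branch :: "real \<Rightarrow> real \<Rightarrow> (real \<Rightarrow> real) \<Rightarrow> bool" where
  "C3_branch a c f \<longleftrightarrow> (\<exists>D :: nat \<Rightarrow> real \<Rightarrow> real.
     (\<forall>k\<le>3. continuous_on {a..c} (D k)) \<and>
     (\<forall>x \<in> {a<..<c}. D 0 x = f x) \<and>
     (\<forall>k<3. \<forall>x \<in> {a<..<c}. (D k has_real_derivative D (Suc k) x) (at x)))"

definition C3_gap_map :: "real \<Rightarrow> (real \<Rightarrow> real) \<Rightarrow> bool" where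
  "C3_gap_map b f \<longleftrightarrow> C3_branch (b-1) 0 f \<and> C3_branch 0 b f"

definition affine_gap_map :: "real \<Rightarrow> (real \<Rightarrow> real) \<Rightarrow> bool" where
  "affine_gap_map b g \<longleftrightarrow> gap_map b g \<and>
     (\<exists>sL tL sR tR. (\<forall>x \<in> {b-1..<0}. g x = sL * x + tL) \<and> (\<forall>x \<in> {0<..b}. g x = sR * x + tR))"

definition C3_norm :: "real \<Rightarrow> (real \<Rightarrow> real) \<Rightarrow> ereal" where
  "C3_norm b h = (SUP p \<in> {0..3::nat} \<times> ({b-1<..<0} \<union> {0<..<b}).
                     ereal \<bar>(deriv ^^ fst p) h (snd p)\<bar>)"

definition gap_interval :: "real \<Rightarrow> (real \<Rightarrow> real) \<Rightarrow> real set" where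
  "gap_interval b f = {f b <..< f (b - 1)}"

definition renorm_left :: "real \<Rightarrow> (real \<Rightarrow> real) \<Rightarrow> nat \<Rightarrow> bool" where
  "renorm_left b f k \<longleftrightarrow>
     0 \<notin> (\<Union>i\<in>{0..k}. closure ((f ^^ i) ` gap_interval b f)) \<and>
     (\<forall>i<k. closure ((f ^^ i) ` gap_interval b f) \<subseteq> {b-1<..<0}) \<and>
     closure ((f ^^ k) ` gap_interval b f) \<subseteq> {0<..<b}"

definition renorm_right :: "real \<Rightarrow> (real \<Rightarrow> real) \<Rightarrow> nat \<Rightarrow> bool" where
  "renorm_right b f k \<longleftrightarrow>
     0 \<notin> (\<Union>i\<in>{0..k}. closure ((f ^^ i) ` gap_interval b f)) \<and>
     (\<forall>i<k. closure ((f ^^ i) ` gap_interval b f) \<subseteq> {0<..<b}) \<and>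
     closure ((f ^^ k) ` gap_interval b f) \<subseteq> {b-1<..<0}"

definition renorm_cond :: "real \<Rightarrow> (real \<Rightarrow> real) \<Rightarrow> nat \<Rightarrow> bool" where
  "renorm_cond b f k \<longleftrightarrow> 1 \<le> k \<and> (renorm_left b f k \<or> renorm_right b f k)"

definition renormalizable :: "real \<times> (real \<Rightarrow> real) \<Rightarrow> bool" where
  "renormalizable m \<longleftrightarrow> (\<exists>k. renorm_cond (fst m) (snd m) k)"

definition renorm_k :: "real \<Rightarrow> (real \<Rightarrow> real) \<Rightarrow> nat" where
  "renorm_k b f = (LEAST k. renorm_cond b f k)"

text \<open>Endpoints of I': with 0^+_j = f^(j-1)(b-1), 0^-_j = f^(j-1)(b).\<close>
definition renorm_interval :: "real \<Rightarrow> (real \<Rightarrow> real) \<Rightarrow> real \<times> real" where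
  "renorm_interval b f = (let k = renorm_k b f in
     if renorm_left b f k then ((f ^^ k) (b - 1), (f ^^ (k + 1)) b)
     else ((f ^^ (k + 1)) (b - 1), (f ^^ k) b))"

definition return_time :: "real \<Rightarrow> real \<Rightarrow> (real \<Rightarrow> real) \<Rightarrow> real \<Rightarrow> nat" where
  "return_time l r f x = (LEAST t. 1 \<le> t \<and> (f ^^ t) x \<in> {l..r})"

text \<open>Renormalization: first return map to I' = [l,r], rescaled by |I'|; new domain
  [l/|I'|, r/|I'|] = [b'-1, b'] with b' = r/|I'|.\<close>
definition renorm :: "real \<times> (real \<Rightarrow> real) \<Rightarrow> real \<times> (real \<Rightarrow> real)" where
  "renorm m = (let b = fst m; f = snd m; (l, r) = renorm_interval b f; L = r - l in
     (r / L, \<lambda>y. (f ^^ return_time l r f (L * y)) (L * y) / L))"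

definition infinitely_renormalizable :: "real \<Rightarrow> (real \<Rightarrow> real) \<Rightarrow> bool" where
  "infinitely_renormalizable b f \<longleftrightarrow> (\<forall>n. renormalizable ((renorm ^^ n) (b, f)))"

end

theory Submission
  imports Defs
begin

text \<open>On each branch the renormalization of a gap map \<open>h\<close> is an iterate \<open>h\<^sup>m\<close>, \<open>m \<ge> 2\<close>,
  conjugated by the scaling with the length \<open>L \<le> 1\<close> of the renormalization interval. If
  \<open>|h'| \<le> \<nu>\<close>, \<open>|h''| \<le> M\<close> and \<open>|h'''| \<le> K\<close>, the chain rule to third order gives
  \<open>|(h\<^sup>m)'| \<le> \<nu>^m\<close>, \<open>|(h\<^sup>m)''| \<le> M m \<nu>^(m-1)\<close> and
  \<open>|(h\<^sup>m)'''| \<le> (K m + 3 M\<^sup>2 m\<^sup>2) \<nu>^(m-1)\<close>, while the scaling only multiplies the higher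
  derivatives by powers of \<open>L\<close>. So the renormalization satisfies the bounds \<open>\<nu>\<^sup>2\<close>, \<open>M C\<close> and
  \<open>(K + 3 M\<^sup>2) C\<close>, where \<open>C\<close> bounds \<open>m\<^sup>2 \<nu>^(m-1)\<close> for \<open>m \<ge> 2\<close>. Along the renormalization
  orbit the first-derivative bound \<open>\<nu>^(2^n)\<close> tends to \<open>0\<close> superexponentially; once it is below
  \<open>1/16\<close> one may take \<open>C = 4 \<nu> \<le> 1/4\<close>, and from then on the bounds on the second and third
  derivatives decay geometrically. A gap map with small bounds is \<open>C\<^sup>3\<close>-close to the affine gap
  map with the same one-sided limits at \<open>0\<close> and a small slope. Renormalizations of right type are
  reduced to the left type by the reflection \<open>x \<mapsto> -x\<close>.\<close>

section \<open>Third-order jets and the chain rule\<close>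

type_synonym jet = "(real \<Rightarrow> real) \<times> (real \<Rightarrow> real) \<times> (real \<Rightarrow> real)"

fun has_jet_at :: "(real \<Rightarrow> real) \<Rightarrow> jet \<Rightarrow> real \<Rightarrow> bool" where
  "has_jet_at f (D1, D2, D3) x \<longleftrightarrow>
     (f has_real_derivative D1 x) (at x) \<and> (D1 has_real_derivative D2 x) (at x) \<and>
     (D2 has_real_derivative D3 x) (at x)"

fun jet_bounded_at :: "jet \<Rightarrow> real \<Rightarrow> real \<Rightarrow> real \<Rightarrow> real \<Rightarrow> bool" where
  "jet_bounded_at (D1, D2, D3) x \<nu> M K \<longleftrightarrow> \<bar>D1 x\<bar> \<le> \<nu> \<and> \<bar>D2 x\<bar> \<le> M \<and> \<bar>D3 x\<bar> \<le> K"

text \<open>Faa di Bruno's formula up to order three.\<close>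
fun jet_comp :: "jet \<Rightarrow> (real \<Rightarrow> real) \<Rightarrow> jet \<Rightarrow> jet" where
  "jet_comp (D1, D2, D3) g (E1, E2, E3) =
     (\<lambda>x. D1 (g x) * E1 x,
      \<lambda>x. D2 (g x) * E1 x ^ 2 + D1 (g x) * E2 x,
      \<lambda>x. D3 (g x) * E1 x ^ 3 + 3 * D2 (g x) * E1 x * E2 x + D1 (g x) * E3 x)"

lemma has_jet_at_comp:
  assumes "has_jet_at f J (g x)" and "has_jet_at g E x"
  shows "has_jet_at (f \<circ> g) (jet_comp J g E) x"
proof -
  obtain D1 D2 D3 E1 E2 E3 where J: "J = (D1, D2, D3)" and E: "E = (E1, E2, E3)"
    by (cases J, cases E) auto
  have f: "(f has_real_derivative D1 (g x)) (at (g x))"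
    and D1: "(D1 has_real_derivative D2 (g x)) (at (g x))"
    and D2: "(D2 has_real_derivative D3 (g x)) (at (g x))"
    using assms(1) by (simp_all add: J)
  have g: "(g has_real_derivative E1 x) (at x)"
    and E1: "(E1 has_real_derivative E2 x) (at x)"
    and E2: "(E2 has_real_derivative E3 x) (at x)"
    using assms(2) by (simp_all add: E)
  have D1g: "((\<lambda>x. D1 (g x)) has_real_derivative D2 (g x) * E1 x) (at x)"
    using DERIV_chain2[OF D1 g] .
  have D2g: "((\<lambda>x. D2 (g x)) has_real_derivative D3 (g x) * E1 x) (at x)"
    using DERIV_chain2[OF D2 g] .
  have "(f \<circ> g has_real_derivative D1 (g x) * E1 x) (at x)"
    using DERIV_chain[OF f g] .
  moreover have "((\<lambda>x. D1 (g x) * E1 x) has_real_derivative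
      D2 (g x) * E1 x ^ 2 + D1 (g x) * E2 x) (at x)"
    using DERIV_mult[OF D1g E1] by (simp add: power2_eq_square algebra_simps)
  moreover have "((\<lambda>x. D2 (g x) * E1 x ^ 2 + D1 (g x) * E2 x) has_real_derivative
      D3 (g x) * E1 x ^ 3 + 3 * D2 (g x) * E1 x * E2 x + D1 (g x) * E3 x) (at x)"
    by (rule derivative_eq_intros D1g D2g E1 E2 refl | simp add: power2_eq_square power3_eq_cube algebra_simps)+
  ultimately show ?thesis by (simp add: J E)
qed

lemma jet_bounded_at_comp:
  assumes "jet_bounded_at J (g x) \<nu> M K" and "jet_bounded_at E x a c d"
  shows "jet_bounded_at (jet_comp J g E) x (\<nu> * a) (M * a ^ 2 + \<nu> * c) (K * a ^ 3 + 3 * M * a * c + \<nu> * d)"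
proof -
  obtain D1 D2 D3 E1 E2 E3 where J: "J = (D1, D2, D3)" and E: "E = (E1, E2, E3)"
    by (cases J, cases E) auto
  have D: "\<bar>D1 (g x)\<bar> \<le> \<nu>" "\<bar>D2 (g x)\<bar> \<le> M" "\<bar>D3 (g x)\<bar> \<le> K"
    and E': "\<bar>E1 x\<bar> \<le> a" "\<bar>E2 x\<bar> \<le> c" "\<bar>E3 x\<bar> \<le> d"
    using assms by (simp_all add: J E)
  have a2: "\<bar>E1 x ^ 2\<bar> \<le> a ^ 2" and a3: "\<bar>E1 x ^ 3\<bar> \<le> a ^ 3"
    using power_mono[OF E'(1) abs_ge_zero, of 2] power_mono[OF E'(1) abs_ge_zero, of 3]
    by (simp_all add: power_abs)
  have "\<bar>D1 (g x) * E1 x\<bar> \<le> \<nu> * a"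
    unfolding abs_mult using D E' by (intro mult_mono) auto
  moreover have "\<bar>D2 (g x) * E1 x ^ 2 + D1 (g x) * E2 x\<bar> \<le> M * a ^ 2 + \<nu> * c"
    unfolding abs_mult using D E' a2
    by (intro abs_triangle_ineq[THEN order_trans] add_mono)
       (auto simp: abs_mult intro!: mult_mono)
  moreover have "\<bar>D3 (g x) * E1 x ^ 3 + 3 * D2 (g x) * E1 x * E2 x + D1 (g x) * E3 x\<bar>
      \<le> K * a ^ 3 + 3 * M * a * c + \<nu> * d"
    using D E' a3
    by (intro abs_triangle_ineq[THEN order_trans] add_mono)
       (auto simp: abs_mult intro!: mult_mono)
  ultimately show ?thesis by (simp add: J E)
qed

lemma jet_bounded_at_mono:
  "jet_bounded_at J x \<nu> M K \<Longrightarrow> \<nu> \<le> \<nu>' \<Longrightarrow> M \<le> M' \<Longrightarrow> K \<le> K' \<Longrightarrow>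
   jet_bounded_at J x \<nu>' M' K'"
  by (cases J) auto

primrec iterate_jet :: "(real \<Rightarrow> real) \<Rightarrow> jet \<Rightarrow> nat \<Rightarrow> jet" where
  "iterate_jet h J 0 = (\<lambda>_. 1, \<lambda>_. 0, \<lambda>_. 0)"
| "iterate_jet h J (Suc m) = jet_comp J (h ^^ m) (iterate_jet h J m)"

lemma has_jet_at_funpow:
  assumes "\<And>i. i < m \<Longrightarrow> has_jet_at h J ((h ^^ i) x)"
  shows "has_jet_at (h ^^ m) (iterate_jet h J m) x"
  using assms
proof (induction m)
  case 0
  show ?case by (auto simp: id_def intro: derivative_eq_intros)
next
  case (Suc m)
  have "has_jet_at (h \<circ> h ^^ m) (jet_comp J (h ^^ m) (iterate_jet h J m)) x"
    using Suc by (intro has_jet_at_comp) auto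
  then show ?case by (simp add: comp_def)
qed

lemma iterate_bounds_step:
  fixes \<nu> M K :: real
  assumes "0 \<le> \<nu>" "\<nu> \<le> 1" "0 \<le> M" "0 \<le> K"
  shows "M * (\<nu> ^ m)\<^sup>2 + \<nu> * (M * m * \<nu> ^ (m - 1)) \<le> M * Suc m * \<nu> ^ m"
    and "K * (\<nu> ^ m) ^ 3 + 3 * M * \<nu> ^ m * (M * m * \<nu> ^ (m - 1))
           + \<nu> * ((K * m + 3 * M\<^sup>2 * (real m)\<^sup>2) * \<nu> ^ (m - 1))
         \<le> (K * Suc m + 3 * M\<^sup>2 * (real (Suc m))\<^sup>2) * \<nu> ^ m"
proof -
  define p where "p = \<nu> ^ m"
  define q where "q = \<nu> ^ (m - 1)"
  have p: "0 \<le> p" "p \<le> 1" and q: "0 \<le> q" "q \<le> 1"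
    using assms(1,2) by (simp_all add: p_def q_def power_le_one)
  \<comment> \<open>the factor \<open>m\<close> makes this hold for \<open>m = 0\<close> as well\<close>
  have shift: "\<nu> * (real m * q) = real m * p" by (cases m) (simp_all add: p_def q_def)
  have "M * p\<^sup>2 \<le> M * p" using p assms(3) power_decreasing[of 1 2 p] by (intro mult_left_mono) auto
  moreover have "\<nu> * (M * m * q) = M * m * p" using shift by (metis mult.assoc mult.left_commute)
  moreover have "M * Suc m * p = M * p + M * m * p" by (simp add: algebra_simps)
  ultimately show "M * (\<nu> ^ m)\<^sup>2 + \<nu> * (M * m * \<nu> ^ (m - 1)) \<le> M * Suc m * \<nu> ^ m"
    unfolding p_def[symmetric] q_def[symmetric] by linarith
  have "K * p ^ 3 \<le> K * p"
    using p assms(4) power_decreasing[of 1 3 p] by (intro mult_left_mono) auto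
  moreover have "3 * M * p * (M * m * q) \<le> 3 * M\<^sup>2 * m * p"
    using p q assms(3) mult_left_le[OF q(2), of "3 * M\<^sup>2 * m * p"] by (simp add: power2_eq_square algebra_simps)
  moreover have "\<nu> * ((K * m + 3 * M\<^sup>2 * (real m)\<^sup>2) * q) = (K + 3 * M\<^sup>2 * m) * (\<nu> * (m * q))"
    by (simp add: power2_eq_square algebra_simps)
  moreover have "(K + 3 * M\<^sup>2 * m) * (m * p) = (K * m + 3 * M\<^sup>2 * (real m)\<^sup>2) * p"
    by (simp add: power2_eq_square algebra_simps)
  moreover have "K * p + 3 * M\<^sup>2 * m * p + (K * m + 3 * M\<^sup>2 * (real m)\<^sup>2) * p
      = (K * Suc m + 3 * M\<^sup>2 * (m + (real m)\<^sup>2)) * p"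
    by (simp add: algebra_simps)
  moreover have "\<dots> \<le> (K * Suc m + 3 * M\<^sup>2 * (real (Suc m))\<^sup>2) * p"
    using p by (intro mult_right_mono add_left_mono mult_left_mono) (auto simp: power2_eq_square algebra_simps)
  ultimately show "K * (\<nu> ^ m) ^ 3 + 3 * M * \<nu> ^ m * (M * m * \<nu> ^ (m - 1))
      + \<nu> * ((K * m + 3 * M\<^sup>2 * (real m)\<^sup>2) * \<nu> ^ (m - 1))
      \<le> (K * Suc m + 3 * M\<^sup>2 * (real (Suc m))\<^sup>2) * \<nu> ^ m"
    unfolding p_def[symmetric] q_def[symmetric] using shift by (smt (verit))
qed

lemma jet_bounded_at_funpow:
  assumes "\<And>i. i < m \<Longrightarrow> jet_bounded_at J ((h ^^ i) x) \<nu> M K" and "0 \<le> \<nu>" "\<nu> \<le> 1"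
  shows "jet_bounded_at (iterate_jet h J m) x (\<nu> ^ m) (M * m * \<nu> ^ (m - 1))
           ((K * m + 3 * M\<^sup>2 * (real m)\<^sup>2) * \<nu> ^ (m - 1))"
  using assms(1)
proof (induction m)
  case 0
  show ?case by simp
next
  case (Suc m)
  have J: "jet_bounded_at J ((h ^^ m) x) \<nu> M K" using Suc.prems by simp
  then have MK: "0 \<le> M" "0 \<le> K" by (cases J, force)+
  have "jet_bounded_at (iterate_jet h J (Suc m)) x (\<nu> * \<nu> ^ m)
      (M * (\<nu> ^ m)\<^sup>2 + \<nu> * (M * m * \<nu> ^ (m - 1)))
      (K * (\<nu> ^ m) ^ 3 + 3 * M * \<nu> ^ m * (M * m * \<nu> ^ (m - 1))
        + \<nu> * ((K * m + 3 * M\<^sup>2 * (real m)\<^sup>2) * \<nu> ^ (m - 1)))"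
    using jet_bounded_at_comp[where g = "h ^^ m", OF J Suc.IH] Suc.prems by simp
  from jet_bounded_at_mono[OF this order_refl iterate_bounds_step[OF assms(2,3) MK]]
  show ?case by simp
qed

lemma has_jet_at_cong_open:
  assumes "has_jet_at f (D1, D2, D3) x" and "open S" "x \<in> S"
    and "\<And>y. y \<in> S \<Longrightarrow> g y = f y" "\<And>y. y \<in> S \<Longrightarrow> E1 y = D1 y"
    "\<And>y. y \<in> S \<Longrightarrow> E2 y = D2 y" "E3 x = D3 x"
  shows "has_jet_at g (E1, E2, E3) x"
proof -
  have "(g has_real_derivative D1 x) (at x)"
    by (rule has_field_derivative_transform_within_open[of f _ x S]) (use assms in auto)
  moreover have "(E1 has_real_derivative D2 x) (at x)"
    by (rule has_field_derivative_transform_within_open[of D1 _ x S]) (use assms in auto)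
  moreover have "(E2 has_real_derivative D3 x) (at x)"
    by (rule has_field_derivative_transform_within_open[of D2 _ x S]) (use assms in auto)
  ultimately show ?thesis using assms(3,5,6,7) by simp
qed

fun jet_rescale :: "real \<Rightarrow> jet \<Rightarrow> jet" where
  "jet_rescale L (E1, E2, E3) = (\<lambda>z. E1 (L * z), \<lambda>z. L * E2 (L * z), \<lambda>z. L\<^sup>2 * E3 (L * z))"

lemma has_jet_at_rescale:
  assumes "has_jet_at f E (L * z)" and "L \<noteq> 0"
  shows "has_jet_at (\<lambda>z. f (L * z) / L) (jet_rescale L E) z"
proof -
  obtain E1 E2 E3 where E: "E = (E1, E2, E3)" by (cases E) auto
  have scale: "((\<lambda>z. L * z) has_real_derivative L) (at z)"
    by (auto intro!: derivative_eq_intros)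
  have f: "(f has_real_derivative E1 (L * z)) (at (L * z))"
    and E1: "(E1 has_real_derivative E2 (L * z)) (at (L * z))"
    and E2: "(E2 has_real_derivative E3 (L * z)) (at (L * z))"
    using assms(1) by (simp_all add: E)
  have "((\<lambda>z. f (L * z) / L) has_real_derivative E1 (L * z) * L / L) (at z)"
    using DERIV_cdivide[OF DERIV_chain2[OF f scale]] .
  moreover have "((\<lambda>z. E1 (L * z)) has_real_derivative L * E2 (L * z)) (at z)"
    using DERIV_chain2[OF E1 scale] by (simp add: mult.commute)
  moreover have "((\<lambda>z. L * E2 (L * z)) has_real_derivative L\<^sup>2 * E3 (L * z)) (at z)"
    using DERIV_cmult[OF DERIV_chain2[OF E2 scale], of L] by (simp add: power2_eq_square ac_simps)
  ultimately show ?thesis using assms(2) by (simp add: E)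
qed

lemma jet_bounded_at_rescale:
  assumes "jet_bounded_at E (L * z) a c d" and "0 \<le> L" "L \<le> 1"
  shows "jet_bounded_at (jet_rescale L E) z a c d"
proof -
  obtain E1 E2 E3 where E: "E = (E1, E2, E3)" by (cases E) auto
  have b: "\<bar>E1 (L * z)\<bar> \<le> a" "\<bar>E2 (L * z)\<bar> \<le> c" "\<bar>E3 (L * z)\<bar> \<le> d"
    using assms(1) by (simp_all add: E)
  have "\<bar>L * E2 (L * z)\<bar> \<le> \<bar>E2 (L * z)\<bar>"
    unfolding abs_mult using assms(2,3) by (simp add: mult_left_le_one_le)
  moreover have "\<bar>L\<^sup>2 * E3 (L * z)\<bar> \<le> \<bar>E3 (L * z)\<bar>"
    unfolding abs_mult using assms(2,3) by (simp add: mult_left_le_one_le power_le_one)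
  ultimately show ?thesis using b by (simp add: E)
qed

definition C3_bounded_on :: "real set \<Rightarrow> (real \<Rightarrow> real) \<Rightarrow> real \<Rightarrow> real \<Rightarrow> real \<Rightarrow> bool" where
  "C3_bounded_on V f \<nu> M K \<longleftrightarrow> (\<exists>J. \<forall>x\<in>V. has_jet_at f J x \<and> jet_bounded_at J x \<nu> M K)"

lemma C3_bounded_on_mono:
  "C3_bounded_on V f \<nu> M K \<Longrightarrow> M \<le> M' \<Longrightarrow> K \<le> K' \<Longrightarrow> C3_bounded_on V f \<nu> M' K'"
  unfolding C3_bounded_on_def by (meson jet_bounded_at_mono order_refl)

lemma C3_bounded_on_Un_open:
  assumes "open A" "open B" "A \<inter> B = {}"
    and "C3_bounded_on A f \<nu> M K" "C3_bounded_on B f \<nu> M K"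
  shows "C3_bounded_on (A \<union> B) f \<nu> M K"
proof -
  obtain A1 A2 A3 where JA: "\<forall>x\<in>A. has_jet_at f (A1, A2, A3) x \<and> jet_bounded_at (A1, A2, A3) x \<nu> M K"
    using assms(4) unfolding C3_bounded_on_def by (metis prod_cases3)
  obtain B1 B2 B3 where JB: "\<forall>x\<in>B. has_jet_at f (B1, B2, B3) x \<and> jet_bounded_at (B1, B2, B3) x \<nu> M K"
    using assms(5) unfolding C3_bounded_on_def by (metis prod_cases3)
  define glue where "glue P Q x = (if x \<in> A then P x else Q x)" for P Q :: "real \<Rightarrow> real" and x
  have glued: "has_jet_at f (G1, G2, G3) x \<and> jet_bounded_at (G1, G2, G3) x \<nu> M K"
    if "has_jet_at f (P1, P2, P3) x" "jet_bounded_at (P1, P2, P3) x \<nu> M K" "open S" "x \<in> S"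
      and "\<And>y. y \<in> S \<Longrightarrow> G1 y = P1 y \<and> G2 y = P2 y \<and> G3 y = P3 y"
    for P1 P2 P3 G1 G2 G3 x S
    using that has_jet_at_cong_open[OF that(1,3,4), of f] by simp
  have "has_jet_at f (glue A1 B1, glue A2 B2, glue A3 B3) x \<and>
      jet_bounded_at (glue A1 B1, glue A2 B2, glue A3 B3) x \<nu> M K" if x: "x \<in> A \<union> B" for x
  proof (cases "x \<in> A")
    case True
    then show ?thesis using JA by (intro glued[OF _ _ assms(1) True]) (auto simp: glue_def)
  next
    case False
    then have "x \<in> B" using x by blast
    moreover have "y \<notin> A" if "y \<in> B" for y using assms(3) that by blast
    ultimately show ?thesis using JB by (intro glued[OF _ _ assms(2) \<open>x \<in> B\<close>]) (auto simp: glue_def)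
  qed
  then show ?thesis unfolding C3_bounded_on_def by blast
qed

lemma iterate_bounds_le:
  fixes \<nu> M K C :: real
  assumes "0 \<le> \<nu>" "\<nu> \<le> 1" "0 \<le> M" "0 \<le> K" "2 \<le> m" "real m ^ 2 * \<nu> ^ (m - 1) \<le> C"
  shows "\<nu> ^ m \<le> \<nu>\<^sup>2" "M * m * \<nu> ^ (m - 1) \<le> M * C"
    "(K * m + 3 * M\<^sup>2 * (real m)\<^sup>2) * \<nu> ^ (m - 1) \<le> (K + 3 * M\<^sup>2) * C"
proof -
  show "\<nu> ^ m \<le> \<nu>\<^sup>2" using power_decreasing[of 2 m \<nu>] assms by simp
  have mm: "real m \<le> (real m)\<^sup>2" using assms(5) by (simp add: power2_eq_square)
  have pn: "0 \<le> \<nu> ^ (m - 1)" using assms by simp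
  have "M * m * \<nu> ^ (m - 1) \<le> M * ((real m)\<^sup>2 * \<nu> ^ (m - 1))"
    using mm pn assms by (simp add: mult.assoc mult_left_mono mult_right_mono)
  also have "\<dots> \<le> M * C" using assms by (intro mult_left_mono) auto
  finally show "M * m * \<nu> ^ (m - 1) \<le> M * C" .
  have "K * m + 3 * M\<^sup>2 * (real m)\<^sup>2 \<le> (K + 3 * M\<^sup>2) * (real m)\<^sup>2"
    using mult_left_mono[OF mm assms(4)] by (simp add: algebra_simps)
  from mult_right_mono[OF this pn]
  have "(K * m + 3 * M\<^sup>2 * (real m)\<^sup>2) * \<nu> ^ (m - 1) \<le> (K + 3 * M\<^sup>2) * ((real m)\<^sup>2 * \<nu> ^ (m - 1))"
    by (simp only: mult.assoc)
  also have "\<dots> \<le> (K + 3 * M\<^sup>2) * C" using assms by (intro mult_left_mono) auto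
  finally show "(K * m + 3 * M\<^sup>2 * (real m)\<^sup>2) * \<nu> ^ (m - 1) \<le> (K + 3 * M\<^sup>2) * C" .
qed

lemma C3_bounded_on_rescaled_funpow:
  assumes h: "C3_bounded_on W h \<nu> M K" and "0 \<le> \<nu>" "\<nu> \<le> 1" "0 \<le> M" "0 \<le> K"
    and L: "0 < L" "L \<le> 1" and m: "2 \<le> m" "real m ^ 2 * \<nu> ^ (m - 1) \<le> C"
    and "open V"
    and orbit: "\<And>z i. z \<in> V \<Longrightarrow> i < m \<Longrightarrow> (h ^^ i) (L * z) \<in> W"
    and F: "\<And>z. z \<in> V \<Longrightarrow> F z = (h ^^ m) (L * z) / L"
  shows "C3_bounded_on V F (\<nu>\<^sup>2) (M * C) ((K + 3 * M\<^sup>2) * C)"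
proof -
  obtain J where J: "\<And>x. x \<in> W \<Longrightarrow> has_jet_at h J x \<and> jet_bounded_at J x \<nu> M K"
    using h unfolding C3_bounded_on_def by blast
  obtain E1 E2 E3 where E: "jet_rescale L (iterate_jet h J m) = (E1, E2, E3)"
    by (metis prod_cases3)
  have "has_jet_at F (E1, E2, E3) z \<and> jet_bounded_at (E1, E2, E3) z (\<nu>\<^sup>2) (M * C) ((K + 3 * M\<^sup>2) * C)"
    if z: "z \<in> V" for z
  proof
    have "has_jet_at (h ^^ m) (iterate_jet h J m) (L * z)"
      using J orbit[OF z] by (intro has_jet_at_funpow) blast
    from has_jet_at_rescale[OF this] L
    have "has_jet_at (\<lambda>z. (h ^^ m) (L * z) / L) (E1, E2, E3) z" by (simp add: E)
    then show "has_jet_at F (E1, E2, E3) z"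
      by (rule has_jet_at_cong_open[OF _ \<open>open V\<close> z]) (simp_all add: F)
    have "jet_bounded_at (iterate_jet h J m) (L * z) (\<nu> ^ m) (M * m * \<nu> ^ (m - 1))
        ((K * m + 3 * M\<^sup>2 * (real m)\<^sup>2) * \<nu> ^ (m - 1))"
      using J orbit[OF z] assms(2,3) by (intro jet_bounded_at_funpow) blast+
    from jet_bounded_at_rescale[OF this] L
    show "jet_bounded_at (E1, E2, E3) z (\<nu>\<^sup>2) (M * C) ((K + 3 * M\<^sup>2) * C)"
      using iterate_bounds_le[OF assms(2-5) m] by (simp add: E)
  qed
  then show ?thesis unfolding C3_bounded_on_def by blast
qed

lemma gap_mapD:
  assumes "gap_map b h"
  shows "b - 1 < 0" "0 < b" "\<And>x. x \<in> {b-1..b} \<Longrightarrow> x \<noteq> 0 \<Longrightarrow> h x \<in> {b-1..b}"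
    "continuous_on {b-1..<0} h" "continuous_on {0<..b} h"
    "strict_mono_on {b-1..<0} h" "strict_mono_on {0<..b} h"
    "(h \<longlongrightarrow> b) (at_left 0)" "(h \<longlongrightarrow> b - 1) (at_right 0)" "h b < h (b - 1)"
  using assms unfolding gap_map_def by auto

lemma gap_map_reflect:
  assumes "gap_map b h"
  shows "gap_map (1 - b) (\<lambda>x. - h (- x))"
proof -
  note g = gap_mapD[OF assms]
  have "continuous_on {-b..<0} (\<lambda>x. h (- x))"
    by (rule continuous_on_compose2[OF g(5)]) (auto intro: continuous_intros)
  moreover have "continuous_on {0<..1-b} (\<lambda>x. h (- x))"
    by (rule continuous_on_compose2[OF g(4)]) (auto intro: continuous_intros)
  moreover have "strict_mono_on {-b..<0} (\<lambda>x. - h (- x))"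
    by (rule strict_mono_onI) (use strict_mono_onD[OF g(7)] in auto)
  moreover have "strict_mono_on {0<..1-b} (\<lambda>x. - h (- x))"
    by (rule strict_mono_onI) (use strict_mono_onD[OF g(6)] in auto)
  moreover have "((\<lambda>x. - h (- x)) \<longlongrightarrow> 1 - b) (at_left 0)"
    unfolding filterlim_at_left_to_right[where a=0] using tendsto_minus[OF g(9)] by simp
  moreover have "((\<lambda>x. - h (- x)) \<longlongrightarrow> - b) (at_right 0)"
    using tendsto_minus[OF g(8)] at_right_minus[of 0] by (simp add: filterlim_filtermap o_def)
  moreover have "- h (- x) \<in> {-b..1-b}" if "x \<in> {-b..1-b}" "x \<noteq> 0" for x
    using g(3)[of "-x"] that by auto
  ultimately show ?thesis
    unfolding gap_map_def using g by (auto intro: continuous_intros)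
qed

lemma gap_map_left_lt:
  assumes "gap_map b h" "x \<in> {b-1..<0}"
  shows "h x < b"
proof -
  note g = gap_mapD[OF assms(1)]
  have "h (x/2) \<le> b"
  proof (rule tendsto_le[OF trivial_limit_at_left_real g(8) tendsto_const])
    have "\<forall>\<^sub>F z in at_left 0. z \<in> {x/2<..<0}"
      using eventually_at_left_real[of "x/2" 0] assms(2) by auto
    then show "\<forall>\<^sub>F z in at_left 0. h (x/2) \<le> h z"
      by (rule eventually_mono) (use assms(2) in \<open>auto intro!: less_imp_le strict_mono_onD[OF g(6)]\<close>)
  qed
  moreover have "h x < h (x/2)" using assms(2) by (intro strict_mono_onD[OF g(6)]) auto
  ultimately show ?thesis by simp
qed

lemma gap_map_right_gt:
  assumes "gap_map b h" "x \<in> {0<..b}"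
  shows "b - 1 < h x"
  using gap_map_left_lt[OF gap_map_reflect[OF assms(1)], of "- x"] assms(2) by simp

definition branch_interiors :: "real \<Rightarrow> real set" where
  "branch_interiors b = {b-1<..<0} \<union> {0<..<b}"

lemma strict_mono_on_cong:
  "A = B \<Longrightarrow> (\<And>x. x \<in> B \<Longrightarrow> f x = g x) \<Longrightarrow> strict_mono_on A f \<longleftrightarrow> strict_mono_on B g"
  by (simp add: strict_mono_on_def)

lemma continuous_strict_mono_on_compose:
  assumes "continuous_on A f \<and> strict_mono_on A f" "continuous_on B g \<and> strict_mono_on B g"
    and "g ` B \<subseteq> A"
  shows "continuous_on B (f \<circ> g) \<and> strict_mono_on B (f \<circ> g)"
proof
  show "continuous_on B (f \<circ> g)"
    using assms continuous_on_subset by (intro continuous_on_compose) blast+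
  show "strict_mono_on B (f \<circ> g)"
  proof (rule strict_mono_onI)
    fix r s assume "r \<in> B" "s \<in> B" "r < s"
    then show "(f \<circ> g) r < (f \<circ> g) s"
      using assms strict_mono_onD[of B g r s] strict_mono_onD[of A f "g r" "g s"] by auto
  qed
qed

section \<open>Renormalization of left type\<close>

locale left_renormalization =
  fixes b :: real and h :: "real \<Rightarrow> real" and k :: nat
  assumes gap: "gap_map b h" and left: "renorm_left b h k" and k_ge1: "1 \<le> k"
begin

lemmas b_pos = gap_mapD(2)[OF gap] and h_into = gap_mapD(3)[OF gap]
  and h_cont_left = gap_mapD(4)[OF gap] and h_cont_right = gap_mapD(5)[OF gap]
  and h_mono_left = gap_mapD(6)[OF gap] and h_mono_right = gap_mapD(7)[OF gap]
  and h_tendsto_left = gap_mapD(8)[OF gap] and h_tendsto_right = gap_mapD(9)[OF gap]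
  and h_b_lt = gap_mapD(10)[OF gap]

(* lo j and hi j are the points 0+_(j+1) and 0-_(j+2) of the paper, so I' = [lo k, hi k]. *)
definition lo :: "nat \<Rightarrow> real" where "lo j = (h ^^ j) (b - 1)"
definition hi :: "nat \<Rightarrow> real" where "hi j = (h ^^ j) (h b)"

abbreviation G where "G \<equiv> gap_interval b h"
abbreviation I0 where "I0 \<equiv> {b - 1 .. h (b - 1)}"

lemma h_b_gt: "b - 1 < h b"
  using gap_map_right_gt[OF gap, of b] b_pos by auto

lemma closure_G: "closure G = {h b .. h (b - 1)}"
  unfolding gap_interval_def using h_b_lt by (simp add: closure_greaterThanLessThan)

lemma closure_funpow_G_left: "i < k \<Longrightarrow> closure ((h ^^ i) ` G) \<subseteq> {b-1<..<0}"
  using left unfolding renorm_left_def by auto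

lemma closure_funpow_G_right: "closure ((h ^^ k) ` G) \<subseteq> {0<..<b}"
  using left unfolding renorm_left_def by auto

text \<open>Up to time \<open>k\<close>, the interval \<open>[b - 1, h (b - 1)]\<close>, which contains the gap, is carried
  by the left branch only.\<close>
lemma funpow_on_I0:
  assumes "j \<le> k"
  shows "continuous_on I0 (h ^^ j) \<and> strict_mono_on I0 (h ^^ j) \<and>
     (h ^^ j) ` closure G \<subseteq> closure ((h ^^ j) ` G) \<and> (\<forall>z\<in>I0. b - 1 \<le> (h ^^ j) z)"
  using assms
proof (induction j)
  case 0
  then show ?case by (auto simp: strict_mono_on_def intro: continuous_on_id)
next
  case (Suc j)
  then have IH: "continuous_on I0 (h ^^ j)" "strict_mono_on I0 (h ^^ j)"
    "(h ^^ j) ` closure G \<subseteq> closure ((h ^^ j) ` G)" "\<forall>z\<in>I0. b - 1 \<le> (h ^^ j) z" by auto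
  have "(h ^^ j) (h (b - 1)) \<in> closure ((h ^^ j) ` G)"
    using IH(3) h_b_lt by (auto simp: closure_G)
  then have top: "(h ^^ j) (h (b - 1)) < 0"
    using closure_funpow_G_left[of j] Suc.prems by auto
  have into: "(h ^^ j) ` I0 \<subseteq> {b-1..<0}"
  proof
    fix y assume "y \<in> (h ^^ j) ` I0"
    then obtain z where z: "z \<in> I0" "y = (h ^^ j) z" by auto
    have "(h ^^ j) z \<le> (h ^^ j) (h (b - 1))"
      using z h_b_gt by (cases "z = h (b - 1)") (auto intro!: less_imp_le strict_mono_onD[OF IH(2)])
    then show "y \<in> {b-1..<0}" using top IH(4) z by auto
  qed
  have cont: "continuous_on I0 (h ^^ Suc j)"
    unfolding funpow.simps o_def by (rule continuous_on_compose2[OF h_cont_left IH(1) into])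
  have "strict_mono_on I0 (h ^^ Suc j)"
  proof (rule strict_mono_onI)
    fix r s assume "r \<in> I0" "s \<in> I0" "r < s"
    then have "(h ^^ j) r < (h ^^ j) s" "(h ^^ j) r \<in> {b-1..<0}" "(h ^^ j) s \<in> {b-1..<0}"
      using strict_mono_onD[OF IH(2)] into by blast+
    then show "(h ^^ Suc j) r < (h ^^ Suc j) s" using strict_mono_onD[OF h_mono_left] by auto
  qed
  moreover have "(h ^^ Suc j) ` closure G \<subseteq> closure ((h ^^ Suc j) ` G)"
  proof (rule image_closure_subset[OF _ closed_closure closure_subset])
    show "continuous_on (closure G) (h ^^ Suc j)"
      using continuous_on_subset[OF cont] h_b_gt by (simp add: closure_G)
  qed
  moreover have "\<forall>z\<in>I0. b - 1 \<le> (h ^^ Suc j) z"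
    using into b_pos h_into by fastforce
  ultimately show ?case using cont by blast
qed

lemma continuous_on_funpow_k: "continuous_on I0 (h ^^ k)"
  using funpow_on_I0 by blast

lemma strict_mono_on_funpow: "j \<le> k \<Longrightarrow> strict_mono_on I0 (h ^^ j)"
  using funpow_on_I0 by blast

lemma lo_Suc: "lo (Suc j) = (h ^^ j) (h (b - 1))"
  unfolding lo_def by (simp add: funpow_Suc_right del: funpow.simps)

lemma lo_hi_interlace: "j \<le> k \<Longrightarrow> lo j < hi j \<and> hi j < lo (Suc j)"
  unfolding lo_Suc unfolding lo_def hi_def
  using strict_mono_onD[OF strict_mono_on_funpow, of j "b-1" "h b"]
    strict_mono_onD[OF strict_mono_on_funpow, of j "h b" "h (b-1)"] h_b_gt h_b_lt by auto

lemma hi_lo_Suc_in_closure: "j \<le> k \<Longrightarrow> hi j \<in> closure ((h ^^ j) ` G) \<and> lo (Suc j) \<in> closure ((h ^^ j) ` G)"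
  using funpow_on_I0[of j] h_b_lt unfolding lo_Suc hi_def by (auto simp: closure_G)

lemma hi_lo_Suc_left: "j < k \<Longrightarrow> hi j \<in> {b-1<..<0} \<and> lo (Suc j) \<in> {b-1<..<0}"
  using hi_lo_Suc_in_closure[of j] closure_funpow_G_left[of j] by auto

lemma hi_lo_Suc_right: "hi k \<in> {0<..<b} \<and> lo (Suc k) \<in> {0<..<b}"
  using hi_lo_Suc_in_closure[of k] closure_funpow_G_right by auto

lemma lo_ge: "j \<le> k \<Longrightarrow> b - 1 \<le> lo j"
  unfolding lo_def using funpow_on_I0[of j] h_b_lt h_b_gt by auto

lemma lo_k: "b - 1 < lo k" "lo k < 0"
  using hi_lo_Suc_left[of "k - 1"] k_ge1 by (cases k; simp)+

lemma lo_mono: "i \<le> j \<Longrightarrow> j \<le> Suc k \<Longrightarrow> lo i \<le> lo j"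
proof (induction j)
  case (Suc j)
  then show ?case using lo_hi_interlace[of j] by (cases "i = Suc j") fastforce+
qed simp

lemma funpow_between: "z \<in> {b-1<..<h b} \<Longrightarrow> j \<le> k \<Longrightarrow> lo j < (h ^^ j) z \<and> (h ^^ j) z < hi j"
  unfolding lo_def hi_def
  using strict_mono_onD[OF strict_mono_on_funpow, of j "b-1" z]
    strict_mono_onD[OF strict_mono_on_funpow, of j z "h b"] h_b_gt h_b_lt by auto

lemma hi_lt_lo_k: "j < k \<Longrightarrow> hi j < lo k"
  using lo_hi_interlace[of j] lo_mono[of "Suc j" k] by auto

lemma left_branch_step:
  assumes "x \<in> {lo k..<0}"
  shows "h x \<in> {lo (Suc k)..<b}" "h (h x) \<in> {b-1<..<h b}"
proof -
  have lo_k: "lo k \<in> {b-1..<0}" using lo_k by auto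
  have "h (lo k) \<le> h x"
    using assms lo_k by (cases "x = lo k") (auto intro!: less_imp_le strict_mono_onD[OF h_mono_left])
  then show hx: "h x \<in> {lo (Suc k)..<b}"
    using gap_map_left_lt[OF gap] assms lo_k by (auto simp: lo_def)
  then have "h x \<in> {0<..b}" using hi_lo_Suc_right by auto
  then show "h (h x) \<in> {b-1<..<h b}"
    using gap_map_right_gt[OF gap] hx b_pos by (auto intro: strict_mono_onD[OF h_mono_right])
qed

lemma right_branch_step: "x \<in> {0<..hi k} \<Longrightarrow> h x \<in> {b-1<..<h b}"
  using gap_map_right_gt[OF gap, of x] hi_lo_Suc_right b_pos
  by (auto intro: strict_mono_onD[OF h_mono_right])

lemma funpow_plus_1: "(h ^^ (j + 1)) x = (h ^^ j) (h x)"
  and funpow_plus_2: "(h ^^ (j + 2)) x = (h ^^ j) (h (h x))"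
  by (simp_all add: funpow_Suc_right del: funpow.simps)

lemma left_orbit: "x \<in> {lo k..<0} \<Longrightarrow> j \<le> k \<Longrightarrow> lo j < (h ^^ (j + 2)) x \<and> (h ^^ (j + 2)) x < hi j"
  unfolding funpow_plus_2 using funpow_between left_branch_step(2) by blast

lemma right_orbit: "x \<in> {0<..hi k} \<Longrightarrow> j \<le> k \<Longrightarrow> lo j < (h ^^ (j + 1)) x \<and> (h ^^ (j + 1)) x < hi j"
  unfolding funpow_plus_1 using funpow_between right_branch_step by blast

lemma left_orbit_in_branch_interiors:
  assumes x: "x \<in> {lo k..<0}" and "i < k + 2"
  shows "(h ^^ i) x \<in> branch_interiors b"
proof -
  have "i = 0 \<or> i = 1 \<or> (i = (i - 2) + 2 \<and> i - 2 < k)" using \<open>i < k + 2\<close> by arith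
  then consider "i = 0" | "i = 1" | j where "i = j + 2" "j < k" by blast
  then show ?thesis
  proof cases
    case 1 then show ?thesis using x lo_k by (auto simp: branch_interiors_def)
  next
    case 2 then show ?thesis using left_branch_step(1)[OF x] hi_lo_Suc_right
      by (auto simp: branch_interiors_def)
  next
    case 3 then show ?thesis using left_orbit[OF x, of j] lo_ge[of j] hi_lo_Suc_left[of j]
      by (auto simp: branch_interiors_def)
  qed
qed

lemma right_orbit_in_branch_interiors:
  assumes x: "x \<in> {0<..hi k}" and "i < k + 1"
  shows "(h ^^ i) x \<in> branch_interiors b"
proof (cases i)
  case 0 then show ?thesis using x hi_lo_Suc_right by (auto simp: branch_interiors_def)
next
  case (Suc j) then show ?thesis
    using right_orbit[OF x, of j] lo_ge[of j] hi_lo_Suc_left[of j] \<open>i < k + 1\<close>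
    by (auto simp: branch_interiors_def)
qed

lemma return_time_left: "x \<in> {lo k..<0} \<Longrightarrow> return_time (lo k) (hi k) h x = k + 2"
  unfolding return_time_def
proof (rule Least_equality)
  assume x: "x \<in> {lo k..<0}"
  show "1 \<le> k + 2 \<and> (h ^^ (k + 2)) x \<in> {lo k..hi k}" using left_orbit[OF x, of k] by auto
  fix t assume t: "1 \<le> t \<and> (h ^^ t) x \<in> {lo k..hi k}"
  show "k + 2 \<le> t"
  proof (rule ccontr)
    assume "\<not> k + 2 \<le> t"
    then have "t = 1 \<or> (t = (t - 2) + 2 \<and> t - 2 < k)" using t by arith
    then consider "t = 1" | j where "t = j + 2" "j < k" by blast
    then show False
    proof cases
      case 1 then show ?thesis using t left_branch_step(1)[OF x] lo_hi_interlace[of k] by auto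
    next
      case 2 then show ?thesis using t left_orbit[OF x, of j] hi_lt_lo_k[of j] by auto
    qed
  qed
qed

lemma return_time_right: "x \<in> {0<..hi k} \<Longrightarrow> return_time (lo k) (hi k) h x = k + 1"
  unfolding return_time_def
proof (rule Least_equality)
  assume x: "x \<in> {0<..hi k}"
  show "1 \<le> k + 1 \<and> (h ^^ (k + 1)) x \<in> {lo k..hi k}" using right_orbit[OF x, of k] by auto
  fix t assume t: "1 \<le> t \<and> (h ^^ t) x \<in> {lo k..hi k}"
  show "k + 1 \<le> t"
  proof (rule ccontr)
    assume "\<not> k + 1 \<le> t"
    then have "t = (t - 1) + 1 \<and> t - 1 < k" using t by arith
    then obtain j where "t = j + 1" "j < k" by blast
    then show False using t right_orbit[OF x, of j] hi_lt_lo_k[of j] by auto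
  qed
qed

definition L where "L = hi k - lo k"
definition b' where "b' = hi k / L"
definition Rh where "Rh y = (h ^^ return_time (lo k) (hi k) h (L * y)) (L * y) / L"

lemma renorm_eq: "renorm_k b h = k \<Longrightarrow> renorm (b, h) = (b', Rh)"
proof -
  assume "renorm_k b h = k"
  then have "renorm_interval b h = (lo k, hi k)"
    using left unfolding renorm_interval_def Let_def lo_def hi_def
    by (simp add: funpow_Suc_right del: funpow.simps)
  then show ?thesis unfolding renorm_def Let_def by (simp add: b'_def Rh_def L_def fun_eq_iff)
qed

lemma L_pos: "0 < L" and L_le1: "L \<le> 1"
  unfolding L_def using lo_k hi_lo_Suc_right by auto

lemma b'_minus_1: "b' - 1 = lo k / L"
  unfolding b'_def using L_pos by (simp add: field_simps L_def)

lemma b'_pos: "0 < b'"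
  unfolding b'_def using L_pos hi_lo_Suc_right by auto

lemma b'_minus_1_neg: "b' - 1 < 0"
  unfolding b'_minus_1 using L_pos lo_k by (simp add: divide_neg_pos)

lemma scale_left: "y \<in> {b'-1..<0} \<Longrightarrow> L * y \<in> {lo k..<0}"
  unfolding b'_minus_1 using L_pos by (auto simp: field_simps mult_neg_pos)

lemma scale_right: "y \<in> {0<..b'} \<Longrightarrow> L * y \<in> {0<..hi k}"
  unfolding b'_def using L_pos by (auto simp: field_simps)

lemma Rh_left: "y \<in> {b'-1..<0} \<Longrightarrow> Rh y = (h ^^ k) (h (h (L * y))) / L"
  unfolding Rh_def using return_time_left[OF scale_left] funpow_plus_2 by simp

lemma Rh_right: "y \<in> {0<..b'} \<Longrightarrow> Rh y = (h ^^ k) (h (L * y)) / L"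
  unfolding Rh_def using return_time_right[OF scale_right] funpow_plus_1 by simp

lemma Rh_left_factors:
  assumes "y \<in> {b'-1..<0}"
  shows "L * y \<in> {b-1..<0}" "h (L * y) \<in> {0<..b}" "h (h (L * y)) \<in> I0"
  using scale_left[OF assms] left_branch_step[OF scale_left[OF assms]] lo_k hi_lo_Suc_right h_b_lt
  by auto

lemma Rh_right_factors:
  assumes "y \<in> {0<..b'}"
  shows "L * y \<in> {0<..b}" "h (L * y) \<in> I0"
  using scale_right[OF assms] right_branch_step[OF scale_right[OF assms]] hi_lo_Suc_right h_b_lt
  by auto

lemma scale_continuous_strict_mono:
  "continuous_on A (\<lambda>y. L * y) \<and> strict_mono_on A (\<lambda>y. L * y)"
  "continuous_on A (\<lambda>x. x / L) \<and> strict_mono_on A (\<lambda>x. x / L)"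
  using L_pos by (auto intro!: continuous_intros strict_mono_onI simp: divide_strict_right_mono)

lemma h_continuous_strict_mono:
  "continuous_on {b-1..<0} h \<and> strict_mono_on {b-1..<0} h"
  "continuous_on {0<..b} h \<and> strict_mono_on {0<..b} h"
  "continuous_on I0 (h ^^ k) \<and> strict_mono_on I0 (h ^^ k)"
  using h_cont_left h_cont_right h_mono_left h_mono_right continuous_on_funpow_k strict_mono_on_funpow
  by auto

lemma Rh_continuous_strict_mono_left:
  "continuous_on {b'-1..<0} Rh \<and> strict_mono_on {b'-1..<0} Rh"
proof -
  let ?A = "{b'-1..<0}"
  note comp = continuous_strict_mono_on_compose
  have "continuous_on ?A (h \<circ> (\<lambda>y. L * y)) \<and> strict_mono_on ?A (h \<circ> (\<lambda>y. L * y))"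
    by (rule comp[OF h_continuous_strict_mono(1) scale_continuous_strict_mono(1)])
      (use Rh_left_factors(1) in auto)
  then have "continuous_on ?A (h \<circ> (h \<circ> (\<lambda>y. L * y))) \<and> strict_mono_on ?A (h \<circ> (h \<circ> (\<lambda>y. L * y)))"
    by (rule comp[OF h_continuous_strict_mono(2)]) (use Rh_left_factors(2) in auto)
  then have "continuous_on ?A ((h ^^ k) \<circ> (h \<circ> (h \<circ> (\<lambda>y. L * y)))) \<and>
      strict_mono_on ?A ((h ^^ k) \<circ> (h \<circ> (h \<circ> (\<lambda>y. L * y))))"
    by (rule comp[OF h_continuous_strict_mono(3)]) (use Rh_left_factors(3) in auto)
  then have "continuous_on ?A ((\<lambda>x. x / L) \<circ> ((h ^^ k) \<circ> (h \<circ> (h \<circ> (\<lambda>y. L * y))))) \<and>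
      strict_mono_on ?A ((\<lambda>x. x / L) \<circ> ((h ^^ k) \<circ> (h \<circ> (h \<circ> (\<lambda>y. L * y)))))"
    by (rule comp[OF scale_continuous_strict_mono(2)]) auto
  moreover have "continuous_on ?A Rh = continuous_on ?A (\<lambda>y. (h ^^ k) (h (h (L * y))) / L)"
    "strict_mono_on ?A Rh = strict_mono_on ?A (\<lambda>y. (h ^^ k) (h (h (L * y))) / L)"
    by (auto intro!: continuous_on_cong strict_mono_on_cong simp: Rh_left)
  ultimately show ?thesis by (simp add: o_def)
qed

lemma Rh_continuous_strict_mono_right:
  "continuous_on {0<..b'} Rh \<and> strict_mono_on {0<..b'} Rh"
proof -
  let ?B = "{0<..b'}"
  note comp = continuous_strict_mono_on_compose
  have "continuous_on ?B (h \<circ> (\<lambda>y. L * y)) \<and> strict_mono_on ?B (h \<circ> (\<lambda>y. L * y))"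
    by (rule comp[OF h_continuous_strict_mono(2) scale_continuous_strict_mono(1)])
      (use Rh_right_factors(1) in auto)
  then have "continuous_on ?B ((h ^^ k) \<circ> (h \<circ> (\<lambda>y. L * y))) \<and>
      strict_mono_on ?B ((h ^^ k) \<circ> (h \<circ> (\<lambda>y. L * y)))"
    by (rule comp[OF h_continuous_strict_mono(3)]) (use Rh_right_factors(2) in auto)
  then have "continuous_on ?B ((\<lambda>x. x / L) \<circ> ((h ^^ k) \<circ> (h \<circ> (\<lambda>y. L * y)))) \<and>
      strict_mono_on ?B ((\<lambda>x. x / L) \<circ> ((h ^^ k) \<circ> (h \<circ> (\<lambda>y. L * y))))"
    by (rule comp[OF scale_continuous_strict_mono(2)]) auto
  moreover have "continuous_on ?B Rh = continuous_on ?B (\<lambda>y. (h ^^ k) (h (L * y)) / L)"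
    "strict_mono_on ?B Rh = strict_mono_on ?B (\<lambda>y. (h ^^ k) (h (L * y)) / L)"
    by (auto intro!: continuous_on_cong strict_mono_on_cong simp: Rh_right)
  ultimately show ?thesis by (simp add: o_def)
qed

lemma Rh_tendsto_left: "(Rh \<longlongrightarrow> b') (at_left 0)"
proof -
  have ev: "\<forall>\<^sub>F y in at_left 0. y \<in> {b'-1<..<0}" using eventually_at_left_real[OF b'_minus_1_neg] .
  have "filterlim (\<lambda>y. L * y) (at_left 0) (at_left 0)"
  proof -
    have "\<forall>\<^sub>F y in at_left 0. L * y \<in> {..<0} \<and> L * y \<noteq> 0"
      using ev by (rule eventually_mono) (use L_pos in \<open>auto simp: mult_pos_neg\<close>)
    then show ?thesis unfolding filterlim_at by (auto intro!: tendsto_eq_intros)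
  qed
  from filterlim_compose[OF h_tendsto_left this]
  have "((\<lambda>y. h (L * y)) \<longlongrightarrow> b) (at_left 0)" .
  then have "((\<lambda>y. h (h (L * y))) \<longlongrightarrow> h b) (at_left 0)"
    by (rule continuous_on_tendsto_compose[OF h_cont_right]) (use b_pos Rh_left_factors in \<open>auto intro: eventually_mono[OF ev]\<close>)
  then have "((\<lambda>y. (h ^^ k) (h (h (L * y)))) \<longlongrightarrow> hi k) (at_left 0)"
    unfolding hi_def by (rule continuous_on_tendsto_compose[OF continuous_on_funpow_k])
      (use h_b_gt h_b_lt Rh_left_factors in \<open>auto intro: eventually_mono[OF ev]\<close>)
  then have "((\<lambda>y. (h ^^ k) (h (h (L * y))) / L) \<longlongrightarrow> b') (at_left 0)"
    unfolding b'_def by (intro tendsto_divide tendsto_const) (use L_pos in auto)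
  then show ?thesis
    by (rule Lim_transform_eventually) (auto intro: eventually_mono[OF ev] simp: Rh_left)
qed

lemma Rh_tendsto_right: "(Rh \<longlongrightarrow> b' - 1) (at_right 0)"
proof -
  have ev: "\<forall>\<^sub>F y in at_right 0. y \<in> {0<..<b'}" using eventually_at_right_real[OF b'_pos] .
  have "filterlim (\<lambda>y. L * y) (at_right 0) (at_right 0)"
    by (rule filterlim_times_pos[OF filterlim_ident L_pos]) simp
  from filterlim_compose[OF h_tendsto_right this]
  have "((\<lambda>y. h (L * y)) \<longlongrightarrow> b - 1) (at_right 0)" .
  then have "((\<lambda>y. (h ^^ k) (h (L * y))) \<longlongrightarrow> lo k) (at_right 0)"
    unfolding lo_def by (rule continuous_on_tendsto_compose[OF continuous_on_funpow_k])
      (use h_b_gt h_b_lt Rh_right_factors in \<open>auto intro: eventually_mono[OF ev]\<close>)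
  then have "((\<lambda>y. (h ^^ k) (h (L * y)) / L) \<longlongrightarrow> b' - 1) (at_right 0)"
    unfolding b'_minus_1 by (intro tendsto_divide tendsto_const) (use L_pos in auto)
  then show ?thesis
    by (rule Lim_transform_eventually) (auto intro: eventually_mono[OF ev] simp: Rh_right)
qed

lemma Rh_range: "y \<in> {b'-1..b'} \<Longrightarrow> y \<noteq> 0 \<Longrightarrow> Rh y \<in> {b'-1..b'}"
proof -
  assume y: "y \<in> {b'-1..b'}" "y \<noteq> 0"
  have "lo k \<le> L * Rh y \<and> L * Rh y \<le> hi k"
  proof (cases "y < 0")
    case True
    then have yl: "y \<in> {b'-1..<0}" using y by auto
    then show ?thesis using left_orbit[OF scale_left, of y k] L_pos
      unfolding Rh_left[OF yl] funpow_plus_2 by auto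
  next
    case False
    then have yr: "y \<in> {0<..b'}" using y by auto
    then show ?thesis using right_orbit[OF scale_right, of y k] L_pos
      unfolding Rh_right[OF yr] funpow_plus_1 by auto
  qed
  then have "lo k / L \<le> Rh y" "Rh y \<le> hi k / L" using L_pos by (auto simp: field_simps)
  then show ?thesis using b'_minus_1 b'_def by auto
qed

lemma Rh_endpoints: "Rh b' < Rh (b' - 1)"
proof -
  have l: "b' - 1 \<in> {b'-1..<0}" and r: "b' \<in> {0<..b'}" using b'_minus_1_neg b'_pos by auto
  have Ll: "L * (b' - 1) = lo k" using L_pos by (simp add: b'_minus_1)
  have Lr: "L * b' = hi k" using L_pos by (simp add: b'_def)
  have "h (hi k) < h (lo (Suc k))"
    using lo_hi_interlace[of k] hi_lo_Suc_right by (intro strict_mono_onD[OF h_mono_right]) auto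
  then have "(h ^^ k) (h (hi k)) < (h ^^ k) (h (h (lo k)))"
    using Rh_right_factors(2)[OF r] Rh_left_factors(3)[OF l] unfolding Ll Lr
    by (intro strict_mono_onD[OF strict_mono_on_funpow]) (auto simp: lo_def)
  then show ?thesis
    unfolding Rh_left[OF l] Rh_right[OF r] Ll Lr using L_pos by (simp add: divide_strict_right_mono)
qed

lemma gap_map_Rh: "gap_map b' Rh"
  unfolding gap_map_def
  using b'_minus_1_neg b'_pos Rh_range Rh_continuous_strict_mono_left Rh_continuous_strict_mono_right
    Rh_tendsto_left Rh_tendsto_right Rh_endpoints by auto

lemma C3_bounded_on_Rh:
  assumes "C3_bounded_on (branch_interiors b) h \<nu> M K"
    and "0 \<le> \<nu>" "\<nu> \<le> 1" "0 \<le> M" "0 \<le> K" "\<forall>m\<ge>2. real m ^ 2 * \<nu> ^ (m - 1) \<le> C"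
  shows "C3_bounded_on (branch_interiors b') Rh (\<nu>\<^sup>2) (M * C) ((K + 3 * M\<^sup>2) * C)"
  unfolding branch_interiors_def
proof (rule C3_bounded_on_Un_open)
  show "C3_bounded_on {b'-1<..<0} Rh (\<nu>\<^sup>2) (M * C) ((K + 3 * M\<^sup>2) * C)"
    using assms(6)[rule_format, of "k + 2"] left_orbit_in_branch_interiors scale_left
    by (intro C3_bounded_on_rescaled_funpow[OF assms(1-5) L_pos L_le1, where m = "k + 2"])
      (auto simp: Rh_def return_time_left)
  show "C3_bounded_on {0<..<b'} Rh (\<nu>\<^sup>2) (M * C) ((K + 3 * M\<^sup>2) * C)"
    using assms(6)[rule_format, of "k + 1"] k_ge1 right_orbit_in_branch_interiors scale_right
    by (intro C3_bounded_on_rescaled_funpow[OF assms(1-5) L_pos L_le1, where m = "k + 1"])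
      (auto simp: Rh_def return_time_right)
qed auto

end

lemma has_jet_at_reflect:
  assumes "has_jet_at h (D1, D2, D3) (- x)"
  shows "has_jet_at (\<lambda>x. - h (- x)) (\<lambda>x. D1 (- x), \<lambda>x. - D2 (- x), \<lambda>x. D3 (- x)) x"
proof -
  have neg: "(uminus has_real_derivative -1) (at x)" by (auto intro!: derivative_eq_intros)
  have "(h has_real_derivative D1 (- x)) (at (- x))" "(D1 has_real_derivative D2 (- x)) (at (- x))"
    "(D2 has_real_derivative D3 (- x)) (at (- x))"
    using assms by simp_all
  from DERIV_chain2[OF this(1) neg] DERIV_chain2[OF this(2) neg] DERIV_chain2[OF this(3) neg]
  show ?thesis by (auto dest: DERIV_minus)
qed

lemma C3_bounded_on_reflect:
  assumes "C3_bounded_on V h \<nu> M K"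
  shows "C3_bounded_on (uminus ` V) (\<lambda>x. - h (- x)) \<nu> M K"
proof -
  obtain D1 D2 D3 where J: "\<And>x. x \<in> V \<Longrightarrow> has_jet_at h (D1, D2, D3) x \<and> jet_bounded_at (D1, D2, D3) x \<nu> M K"
    using assms unfolding C3_bounded_on_def by (metis prod_cases3)
  have "has_jet_at (\<lambda>x. - h (- x)) (\<lambda>x. D1 (- x), \<lambda>x. - D2 (- x), \<lambda>x. D3 (- x)) x \<and>
      jet_bounded_at (\<lambda>x. D1 (- x), \<lambda>x. - D2 (- x), \<lambda>x. D3 (- x)) x \<nu> M K" if "x \<in> uminus ` V" for x
    using J[of "- x"] that has_jet_at_reflect[of h D1 D2 D3 x] by auto
  then show ?thesis unfolding C3_bounded_on_def by blast
qed

lemma branch_interiors_reflect: "branch_interiors (1 - b) = uminus ` branch_interiors b"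
  unfolding branch_interiors_def by (auto simp: image_Un)

definition bounded_gap_map :: "real \<times> (real \<Rightarrow> real) \<Rightarrow> real \<Rightarrow> real \<Rightarrow> real \<Rightarrow> bool" where
  "bounded_gap_map m \<nu> M K \<longleftrightarrow>
     gap_map (fst m) (snd m) \<and> C3_bounded_on (branch_interiors (fst m)) (snd m) \<nu> M K"

definition reflect :: "real \<times> (real \<Rightarrow> real) \<Rightarrow> real \<times> (real \<Rightarrow> real)" where
  "reflect m = (1 - fst m, \<lambda>x. - snd m (- x))"

lemma reflect_reflect: "reflect (reflect m) = m"
  unfolding reflect_def by (cases m) auto

lemma bounded_gap_map_reflect: "bounded_gap_map m \<nu> M K \<Longrightarrow> bounded_gap_map (reflect m) \<nu> M K"
  unfolding bounded_gap_map_def reflect_def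
  by (simp add: gap_map_reflect C3_bounded_on_reflect branch_interiors_reflect)

lemma funpow_reflect: "((\<lambda>x. - h (- x)) ^^ i) x = - (h ^^ i) (- x)" for h :: "real \<Rightarrow> real"
  by (induction i arbitrary: x) simp_all

lemma closure_funpow_gap_interval_reflect:
  fixes h :: "real \<Rightarrow> real"
  shows "closure (((\<lambda>x. - h (- x)) ^^ i) ` gap_interval (1 - b) (\<lambda>x. - h (- x)))
    = uminus ` closure ((h ^^ i) ` gap_interval b h)"
proof -
  have "gap_interval (1 - b) (\<lambda>x. - h (- x)) = uminus ` gap_interval b h"
    unfolding gap_interval_def by auto
  then have "((\<lambda>x. - h (- x)) ^^ i) ` gap_interval (1 - b) (\<lambda>x. - h (- x))
      = (\<lambda>x. (- 1) *\<^sub>R x) ` ((h ^^ i) ` gap_interval b h)"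
    by (simp add: image_image funpow_reflect)
  moreover have "(\<lambda>x::real. (- 1) *\<^sub>R x) ` S = uminus ` S" for S by simp
  ultimately show ?thesis by (metis closure_scaleR)
qed

lemma uminus_image_subset_iff: "uminus ` A \<subseteq> B \<longleftrightarrow> A \<subseteq> uminus ` B" for A B :: "real set"
  by (auto simp: image_iff) (metis minus_minus subsetD imageI)

lemma renorm_left_reflect:
  "renorm_left (1 - b) (\<lambda>x. - h (- x)) k \<longleftrightarrow> renorm_right b h k"
  and renorm_right_reflect:
  "renorm_right (1 - b) (\<lambda>x. - h (- x)) k \<longleftrightarrow> renorm_left b h k"
  unfolding renorm_left_def renorm_right_def closure_funpow_gap_interval_reflect
    uminus_image_subset_iff by (auto simp: image_iff)

lemma renorm_k_reflect: "renorm_k (1 - b) (\<lambda>x. - h (- x)) = renorm_k b h"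
  unfolding renorm_k_def renorm_cond_def renorm_left_reflect renorm_right_reflect by meson

lemma return_time_reflect:
  "return_time (- r) (- l) (\<lambda>x. - h (- x)) x = return_time l r h (- x)"
  unfolding return_time_def funpow_reflect by (rule arg_cong[where f = Least]) auto

lemma renorm_reflect:
  assumes "renorm_right b h (renorm_k b h)" "\<not> renorm_left b h (renorm_k b h)"
    and "(h ^^ renorm_k b h) b \<noteq> (h ^^ (renorm_k b h + 1)) (b - 1)"
  shows "renorm (reflect (b, h)) = reflect (renorm (b, h))"
proof -
  define k l r where "k = renorm_k b h" and "l = (h ^^ (k + 1)) (b - 1)" and "r = (h ^^ k) b"
  have "renorm_interval b h = (l, r)"
    unfolding renorm_interval_def k_def[symmetric] Let_def l_def r_def using assms(2) k_def by simp
  moreover have "renorm_interval (1 - b) (\<lambda>x. - h (- x)) = (- r, - l)"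
    unfolding renorm_interval_def renorm_k_reflect k_def[symmetric] Let_def l_def r_def
    using assms(1) k_def by (simp add: renorm_left_reflect funpow_reflect)
  moreover have "- l / (r - l) = 1 - r / (r - l)"
    using assms(3) by (simp add: l_def r_def k_def field_simps)
  ultimately show ?thesis
    unfolding renorm_def reflect_def Let_def by (simp add: return_time_reflect funpow_reflect)
qed

lemma bounded_gap_map_renorm:
  assumes "bounded_gap_map m \<nu> M K" and "0 \<le> \<nu>" "\<nu> \<le> 1" "0 \<le> M" "0 \<le> K"
    and "\<forall>m\<ge>2. real m ^ 2 * \<nu> ^ (m - 1) \<le> C" and "renormalizable m"
  shows "bounded_gap_map (renorm m) (\<nu>\<^sup>2) (M * C) ((K + 3 * M\<^sup>2) * C)"
proof -
  obtain b h where m: "m = (b, h)" by fastforce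
  define k where "k = renorm_k b h"
  have "renorm_cond b h k"
    using assms(7) unfolding m renormalizable_def k_def renorm_k_def by (auto intro: LeastI_ex)
  then have k: "1 \<le> k" "renorm_left b h k \<or> renorm_right b h k" unfolding renorm_cond_def by auto
  have gap: "gap_map b h" and C3: "C3_bounded_on (branch_interiors b) h \<nu> M K"
    using assms(1) by (simp_all add: m bounded_gap_map_def)
  show ?thesis
  proof (cases "renorm_left b h k")
    case True
    interpret left_renormalization b h k using gap True k by unfold_locales
    show ?thesis
      using renorm_eq[OF k_def[symmetric]] gap_map_Rh C3_bounded_on_Rh[OF C3 assms(2-6)]
      by (simp add: m bounded_gap_map_def)
  next
    case False
    \<comment> \<open>the reflection \<open>x \<mapsto> -x\<close> exchanges the branches and makes the renormalization left\<close>
    interpret R: left_renormalization "1 - b" "\<lambda>x. - h (- x)" k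
      using gap_map_reflect[OF gap] k False by unfold_locales (auto simp: renorm_left_reflect)
    have "R.L = (h ^^ k) b - (h ^^ (k + 1)) (b - 1)"
      unfolding R.L_def R.lo_def R.hi_def funpow_reflect by (simp add: funpow_Suc_right del: funpow.simps)
    then have "renorm (reflect m) = reflect (renorm m)"
      using renorm_reflect[of b h] k False R.L_pos by (simp add: m k_def)
    moreover have "renorm (reflect m) = (R.b', R.Rh)"
      using R.renorm_eq renorm_k_reflect by (simp add: m reflect_def k_def)
    ultimately have "reflect (renorm m) = (R.b', R.Rh)" by simp
    moreover have "C3_bounded_on (branch_interiors (1 - b)) (\<lambda>x. - h (- x)) \<nu> M K"
      using bounded_gap_map_reflect[OF assms(1)] by (simp add: m reflect_def bounded_gap_map_def)
    ultimately have "bounded_gap_map (reflect (renorm m)) (\<nu>\<^sup>2) (M * C) ((K + 3 * M\<^sup>2) * C)"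
      using R.gap_map_Rh R.C3_bounded_on_Rh assms(2-6) by (simp add: bounded_gap_map_def)
    from bounded_gap_map_reflect[OF this] show ?thesis by (simp add: reflect_reflect)
  qed
qed

lemma C3_branch_jet:
  assumes "C3_branch a c f"
  obtains D1 D2 D3 M K where "0 \<le> M" "0 \<le> K"
    "\<And>x. x \<in> {a<..<c} \<Longrightarrow> has_jet_at f (D1, D2, D3) x \<and> \<bar>D2 x\<bar> \<le> M \<and> \<bar>D3 x\<bar> \<le> K"
proof -
  obtain D :: "nat \<Rightarrow> real \<Rightarrow> real" where D: "\<forall>k\<le>3. continuous_on {a..c} (D k)"
     "\<forall>x \<in> {a<..<c}. D 0 x = f x" "\<forall>k<3. \<forall>x \<in> {a<..<c}. (D k has_real_derivative D (Suc k) x) (at x)"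
    using assms unfolding C3_branch_def by blast
  have "bounded (D 2 ` {a..c})" "bounded (D 3 ` {a..c})"
    using D(1) by (auto intro!: compact_imp_bounded compact_continuous_image)
  then obtain M K where "0 < M" "\<forall>y\<in>D 2 ` {a..c}. norm y \<le> M" and "0 < K" "\<forall>y\<in>D 3 ` {a..c}. norm y \<le> K"
    unfolding bounded_pos by blast
  moreover have "has_jet_at f (D 1, D 2, D 3) x" if x: "x \<in> {a<..<c}" for x
  proof -
    have "(D 0 has_real_derivative D 1 x) (at x)" using D(3) x by force
    then have "(f has_real_derivative D 1 x) (at x)"
      by (rule has_field_derivative_transform_within_open[OF _ open_greaterThanLessThan x]) (use D(2) in auto)
    moreover have "(D 1 has_real_derivative D 2 x) (at x)" "(D 2 has_real_derivative D 3 x) (at x)"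
      using D(3) x by (auto simp: numeral_2_eq_2 numeral_3_eq_3)
    ultimately show ?thesis by simp
  qed
  ultimately show ?thesis using that[of M K "D 1" "D 2" "D 3"] by auto
qed

lemma dissipative_derivative_bound:
  assumes "dissipative_gap_map b f"
  obtains \<nu> where "0 < \<nu>" "\<nu> < 1"
    "\<And>x d. x \<in> branch_interiors b \<Longrightarrow> (f has_real_derivative d) (at x) \<Longrightarrow> \<bar>d\<bar> \<le> \<nu>"
proof -
  obtain \<nu> where \<nu>: "\<nu> < 1" and D: "\<forall>x \<in> {b-1..b} - {0}. \<exists>d.
      (f has_real_derivative d) (at x within ({b-1..b} - {0})) \<and> 0 < d \<and> d \<le> \<nu>"
    using assms unfolding dissipative_gap_map_def by blast
  have b: "b - 1 < 0" "0 < b" using assms gap_mapD unfolding dissipative_gap_map_def by blast+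
  then have "0 < \<nu>" using D by fastforce
  moreover have "\<bar>d\<bar> \<le> \<nu>" if x: "x \<in> branch_interiors b" and d: "(f has_real_derivative d) (at x)" for x d
  proof -
    have "x \<in> {b-1..b} - {0}" using x b by (auto simp: branch_interiors_def)
    then obtain d' where d': "(f has_real_derivative d') (at x within ({b-1..b} - {0}))" "0 < d'" "d' \<le> \<nu>"
      using D by blast
    have "at x within ({b-1..b} - {0}) = at x"
      by (rule at_within_open_subset[of _ "branch_interiors b"]) (use x b in \<open>auto simp: branch_interiors_def\<close>)
    then have "d' = d" using d'(1) d DERIV_unique by metis
    then show ?thesis using d' by simp
  qed
  ultimately show ?thesis using \<nu> that by blast
qed

lemma C3_bounded_on_branch:
  assumes "C3_branch a c f"
    and "\<And>x d. x \<in> {a<..<c} \<Longrightarrow> (f has_real_derivative d) (at x) \<Longrightarrow> \<bar>d\<bar> \<le> \<nu>"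
  obtains M K where "0 \<le> M" "0 \<le> K" "C3_bounded_on {a<..<c} f \<nu> M K"
proof -
  obtain E1 E2 E3 M K where MK: "0 \<le> M" "0 \<le> K"
    and E: "\<And>x. x \<in> {a<..<c} \<Longrightarrow> has_jet_at f (E1, E2, E3) x \<and> \<bar>E2 x\<bar> \<le> M \<and> \<bar>E3 x\<bar> \<le> K"
    by (rule C3_branch_jet[OF assms(1)]) blast
  have "\<bar>E1 x\<bar> \<le> \<nu>" if x: "x \<in> {a<..<c}" for x
    using E[OF x] by (intro assms(2)[OF x]) simp
  then have "\<forall>x\<in>{a<..<c}. has_jet_at f (E1, E2, E3) x \<and> jet_bounded_at (E1, E2, E3) x \<nu> M K"
    using E by simp
  then show ?thesis using MK that unfolding C3_bounded_on_def by blast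
qed

lemma bounded_gap_map_initial:
  assumes "dissipative_gap_map b f" and "C3_gap_map b f"
  obtains \<nu> M K where "0 < \<nu>" "\<nu> < 1" "0 \<le> M" "0 \<le> K" "bounded_gap_map (b, f) \<nu> M K"
proof -
  have gap: "gap_map b f" using assms(1) unfolding dissipative_gap_map_def by blast
  obtain \<nu> where \<nu>: "0 < \<nu>" "\<nu> < 1"
    and D1: "\<And>x d. x \<in> branch_interiors b \<Longrightarrow> (f has_real_derivative d) (at x) \<Longrightarrow> \<bar>d\<bar> \<le> \<nu>"
    using dissipative_derivative_bound[OF assms(1)] by blast
  have br: "C3_branch (b - 1) 0 f" "C3_branch 0 b f" using assms(2) by (simp_all add: C3_gap_map_def)
  obtain M1 K1 where MK1: "0 \<le> M1" "0 \<le> K1" and left: "C3_bounded_on {b-1<..<0} f \<nu> M1 K1"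
    using br(1) by (rule C3_bounded_on_branch) (use D1 in \<open>auto simp: branch_interiors_def\<close>)
  obtain M2 K2 where MK2: "0 \<le> M2" "0 \<le> K2" and right: "C3_bounded_on {0<..<b} f \<nu> M2 K2"
    using br(2) by (rule C3_bounded_on_branch) (use D1 in \<open>auto simp: branch_interiors_def\<close>)
  have "C3_bounded_on {b-1<..<0} f \<nu> (max M1 M2) (max K1 K2)"
    "C3_bounded_on {0<..<b} f \<nu> (max M1 M2) (max K1 K2)"
    using C3_bounded_on_mono[OF left] C3_bounded_on_mono[OF right] by simp_all
  then have "C3_bounded_on (branch_interiors b) f \<nu> (max M1 M2) (max K1 K2)"
    unfolding branch_interiors_def by (intro C3_bounded_on_Un_open) auto
  then show ?thesis
    using that[of \<nu> "max M1 M2" "max K1 K2"] \<nu> gap MK1 MK2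
    by (simp add: bounded_gap_map_def le_max_iff_disj)
qed

section \<open>Approximation by affine gap maps\<close>

definition slope_gap_map :: "real \<Rightarrow> real \<Rightarrow> real \<Rightarrow> real" where
  "slope_gap_map b s x = (if x < 0 then b + s * x else b - 1 + s * x)"

lemma affine_gap_map_slope_gap_map:
  assumes "b - 1 < 0" "0 < b" "0 < s" "s < 1"
  shows "affine_gap_map b (slope_gap_map b s)"
proof -
  let ?g = "\<lambda>x. if x < 0 then b + s * x else b - 1 + s * x"
  have "?g x \<in> {b-1..b}" if "x \<in> {b-1..b} - {0}" for x
  proof (cases "x < 0")
    case True
    have "(1 - s) * x \<le> 0" using True assms(4) by (simp add: mult_nonneg_nonpos)
    then have "x \<le> s * x" by (simp add: left_diff_distrib)
    moreover have "b - 1 \<le> x" using that by simp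
    ultimately have "- 1 \<le> s * x" using assms(2) by linarith
    moreover have "s * x \<le> 0" using True assms(3) by (simp add: mult_pos_neg less_imp_le)
    ultimately show ?thesis using True by simp
  next
    case False
    then have "s * x \<le> x" using assms(3,4) by (simp add: mult_left_le_one_le)
    moreover have "x \<le> b" using that by simp
    ultimately have "s * x \<le> 1" using assms(1) by linarith
    then show ?thesis using False assms(3) by simp
  qed
  moreover have "continuous_on {b-1..<0} ?g"
    by (rule continuous_on_eq[of _ "\<lambda>x. b + s * x"]) (auto intro!: continuous_intros)
  moreover have "continuous_on {0<..b} ?g"
    by (rule continuous_on_eq[of _ "\<lambda>x. b - 1 + s * x"]) (auto intro!: continuous_intros)
  moreover have "strict_mono_on {b-1..<0} ?g" "strict_mono_on {0<..b} ?g"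
    using assms(3) by (auto intro!: strict_mono_onI)
  moreover have "(?g \<longlongrightarrow> b) (at_left 0)"
    by (rule Lim_transform_eventually[of "\<lambda>x. b + s * x"])
      (auto intro!: tendsto_eq_intros eventually_at_leftI[of "-1"])
  moreover have "(?g \<longlongrightarrow> b - 1) (at_right 0)"
    by (rule Lim_transform_eventually[of "\<lambda>x. b - 1 + s * x"])
      (auto intro!: tendsto_eq_intros eventually_at_rightI[of _ 1])
  moreover have "?g b < ?g (b - 1)" using assms by (simp add: algebra_simps)
  moreover have "\<forall>x\<in>{b-1..<0}. ?g x = s * x + b" "\<forall>x\<in>{0<..b}. ?g x = s * x + (b - 1)"
    by auto
  ultimately have "affine_gap_map b ?g"
    unfolding affine_gap_map_def gap_map_def using assms by blast
  then show ?thesis by (simp add: slope_gap_map_def[abs_def])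
qed

lemma has_jet_at_slope_gap_map:
  assumes "x \<in> branch_interiors b"
  shows "has_jet_at (slope_gap_map b s) (\<lambda>_. s, \<lambda>_. 0, \<lambda>_. 0) x"
proof (cases "x < 0")
  case True
  have "has_jet_at (\<lambda>x. b + s * x) (\<lambda>_. s, \<lambda>_. 0, \<lambda>_. 0) x" by (auto intro!: derivative_eq_intros)
  then show ?thesis
    by (rule has_jet_at_cong_open[where S = "{..<0}"]) (use True in \<open>auto simp: slope_gap_map_def\<close>)
next
  case False
  then have "0 < x" using assms by (auto simp: branch_interiors_def)
  have "has_jet_at (\<lambda>x. b - 1 + s * x) (\<lambda>_. s, \<lambda>_. 0, \<lambda>_. 0) x" by (auto intro!: derivative_eq_intros)
  then show ?thesis
    by (rule has_jet_at_cong_open[where S = "{0<..}"]) (use \<open>0 < x\<close> in \<open>auto simp: slope_gap_map_def\<close>)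
qed

lemma gap_map_dist_left_end:
  assumes "gap_map b h" "C3_bounded_on (branch_interiors b) h \<nu> M K" and x: "x \<in> {b-1<..<0}"
  shows "\<bar>h x - b\<bar> \<le> \<nu> * (- x)"
proof -
  obtain D1 D2 D3 where J: "\<And>y. y \<in> branch_interiors b \<Longrightarrow>
      has_jet_at h (D1, D2, D3) y \<and> jet_bounded_at (D1, D2, D3) y \<nu> M K"
    using assms(2) unfolding C3_bounded_on_def by (metis prod_cases3)
  have ev: "\<forall>\<^sub>F y in at_left 0. y \<in> {x<..<0}" using eventually_at_left_real[of x 0] x by auto
  have "\<bar>b - h x\<bar> \<le> \<nu> * (0 - x)"
  proof (rule tendsto_le[OF trivial_limit_at_left_real])
    show "((\<lambda>y. \<bar>h y - h x\<bar>) \<longlongrightarrow> \<bar>b - h x\<bar>) (at_left 0)"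
      by (intro tendsto_intros gap_mapD(8)[OF assms(1)])
    show "((\<lambda>y. \<nu> * (y - x)) \<longlongrightarrow> \<nu> * (0 - x)) (at_left 0)"
      by (intro tendsto_intros)
    show "\<forall>\<^sub>F y in at_left 0. \<bar>h y - h x\<bar> \<le> \<nu> * (y - x)"
    proof (rule eventually_mono[OF ev])
      fix y assume y: "y \<in> {x<..<0}"
      have "\<exists>z>x. z < y \<and> h y - h x = (y - x) * D1 z"
        by (rule MVT2) (use y x J in \<open>auto simp: branch_interiors_def\<close>)
      then obtain z where z: "x < z" "z < y" "h y - h x = (y - x) * D1 z" by blast
      have "\<bar>D1 z\<bar> \<le> \<nu>" using J[of z] z x y by (auto simp: branch_interiors_def)
      then show "\<bar>h y - h x\<bar> \<le> \<nu> * (y - x)" using z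
        by (simp add: abs_mult mult.commute mult_left_mono)
    qed
  qed
  then show ?thesis by (simp add: abs_minus_commute)
qed

lemma gap_map_dist_right_end:
  assumes "gap_map b h" "C3_bounded_on (branch_interiors b) h \<nu> M K" and x: "x \<in> {0<..<b}"
  shows "\<bar>h x - (b - 1)\<bar> \<le> \<nu> * x"
proof -
  have "bounded_gap_map (reflect (b, h)) \<nu> M K"
    using assms by (intro bounded_gap_map_reflect) (simp add: bounded_gap_map_def)
  then have "\<bar>- h x - (1 - b)\<bar> \<le> \<nu> * x"
    using gap_map_dist_left_end[of "1 - b" "\<lambda>x. - h (- x)" \<nu> M K "- x"] x
    by (simp add: reflect_def bounded_gap_map_def)
  then show ?thesis by (simp add: abs_minus_commute)
qed

lemma dist_slope_gap_map:
  assumes "gap_map b h" "C3_bounded_on (branch_interiors b) h \<nu> M K" "0 \<le> s"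
    and x: "x \<in> branch_interiors b"
  shows "\<bar>h x - slope_gap_map b s x\<bar> \<le> \<nu> + s"
proof (cases "x < 0")
  case True
  then have xl: "x \<in> {b-1<..<0}" and "- x \<le> 1"
    using x gap_mapD(2)[OF assms(1)] by (auto simp: branch_interiors_def)
  have d: "\<bar>h x - b\<bar> \<le> \<nu> * (- x)" by (rule gap_map_dist_left_end[OF assms(1,2) xl])
  then have "0 \<le> \<nu> * (- x)" by (meson abs_ge_zero order_trans)
  then have "0 \<le> \<nu>" using True by (auto simp: mult_le_0_iff)
  then have "\<nu> * (- x) \<le> \<nu>" "- (s * x) \<le> s" "s * x \<le> 0"
    using mult_left_le[OF \<open>- x \<le> 1\<close>] True assms(3) by (auto simp: mult_nonneg_nonpos)
  then show ?thesis using d True unfolding slope_gap_map_def by (simp only: if_True abs_le_iff) linarith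
next
  case False
  then have xr: "x \<in> {0<..<b}" and "x \<le> 1"
    using x gap_mapD(1)[OF assms(1)] by (auto simp: branch_interiors_def)
  have d: "\<bar>h x - (b - 1)\<bar> \<le> \<nu> * x" by (rule gap_map_dist_right_end[OF assms(1,2) xr])
  then have "0 \<le> \<nu> * x" by (meson abs_ge_zero order_trans)
  then have "0 \<le> \<nu>" using xr by (simp add: zero_le_mult_iff)
  then have "\<nu> * x \<le> \<nu>" "s * x \<le> s" "0 \<le> s * x"
    using mult_left_le[OF \<open>x \<le> 1\<close>] xr assms(3) by auto
  then show ?thesis using d False unfolding slope_gap_map_def by (simp only: if_False abs_le_iff) linarith
qed

lemma has_jet_at_diff:
  assumes "has_jet_at f (D1, D2, D3) x" "has_jet_at g (E1, E2, E3) x"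
  shows "has_jet_at (\<lambda>x. f x - g x) (\<lambda>x. D1 x - E1 x, \<lambda>x. D2 x - E2 x, \<lambda>x. D3 x - E3 x) x"
  using assms by (auto intro: DERIV_diff)

lemma C3_norm_le_jet:
  assumes "\<And>x. x \<in> branch_interiors b \<Longrightarrow>
    has_jet_at \<phi> (D1, D2, D3) x \<and> \<bar>\<phi> x\<bar> \<le> \<epsilon> \<and> jet_bounded_at (D1, D2, D3) x \<epsilon> \<epsilon> \<epsilon>"
  shows "C3_norm b \<phi> \<le> ereal \<epsilon>"
proof -
  have U: "open (branch_interiors b)" unfolding branch_interiors_def by auto
  have d1: "deriv \<phi> y = D1 y" if "y \<in> branch_interiors b" for y
    using assms[OF that] by (intro DERIV_imp_deriv) simp
  have d2: "deriv (deriv \<phi>) y = D2 y" if y: "y \<in> branch_interiors b" for y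
  proof -
    have "(deriv \<phi> has_real_derivative D2 y) (at y)"
      by (rule has_field_derivative_transform_within_open[of D1 _ y, OF _ U y]) (use assms[OF y] in \<open>auto simp: d1\<close>)
    then show ?thesis by (rule DERIV_imp_deriv)
  qed
  have d3: "deriv (deriv (deriv \<phi>)) y = D3 y" if y: "y \<in> branch_interiors b" for y
  proof -
    have "(deriv (deriv \<phi>) has_real_derivative D3 y) (at y)"
      by (rule has_field_derivative_transform_within_open[of D2 _ y, OF _ U y]) (use assms[OF y] in \<open>auto simp: d2\<close>)
    then show ?thesis by (rule DERIV_imp_deriv)
  qed
  have "\<bar>(deriv ^^ n) \<phi> y\<bar> \<le> \<epsilon>" if n: "n \<le> 3" and y: "y \<in> branch_interiors b" for n y
  proof -
    have bounds: "\<bar>\<phi> y\<bar> \<le> \<epsilon>" "\<bar>D1 y\<bar> \<le> \<epsilon>" "\<bar>D2 y\<bar> \<le> \<epsilon>" "\<bar>D3 y\<bar> \<le> \<epsilon>"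
      using assms[OF y] by simp_all
    consider "n = 0" | "n = 1" | "n = 2" | "n = 3" using n by linarith
    then show ?thesis
      by cases (simp_all add: bounds d1[OF y] d2[OF y] d3[OF y] numeral_2_eq_2 numeral_3_eq_3)
  qed
  then show ?thesis
    unfolding C3_norm_def SUP_le_iff by (auto simp: branch_interiors_def)
qed

lemma affine_approximation:
  assumes "bounded_gap_map m \<nu> M K" and "0 < \<epsilon>" "\<nu> \<le> \<epsilon> / 2" "M \<le> \<epsilon>" "K \<le> \<epsilon>"
  shows "\<exists>g. affine_gap_map (fst m) g \<and> C3_norm (fst m) (\<lambda>x. snd m x - g x) \<le> ereal \<epsilon>"
proof -
  obtain b h where m: "m = (b, h)" by fastforce
  have gap: "gap_map b h" and C3: "C3_bounded_on (branch_interiors b) h \<nu> M K"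
    using assms(1) by (simp_all add: m bounded_gap_map_def)
  obtain D1 D2 D3 where J: "\<And>x. x \<in> branch_interiors b \<Longrightarrow>
      has_jet_at h (D1, D2, D3) x \<and> jet_bounded_at (D1, D2, D3) x \<nu> M K"
    using C3 unfolding C3_bounded_on_def by (metis prod_cases3)
  define s where "s = min (\<epsilon> / 2) (1 / 2)"
  have s: "0 < s" "s \<le> \<epsilon> / 2" "s < 1" using assms(2) by (auto simp: s_def)
  have "C3_norm b (\<lambda>x. h x - slope_gap_map b s x) \<le> ereal \<epsilon>"
  proof (rule C3_norm_le_jet[of b _ "\<lambda>x. D1 x - s" "\<lambda>x. D2 x - 0" "\<lambda>x. D3 x - 0"], intro conjI)
    fix x assume x: "x \<in> branch_interiors b"
    show "has_jet_at (\<lambda>x. h x - slope_gap_map b s x) (\<lambda>x. D1 x - s, \<lambda>x. D2 x - 0, \<lambda>x. D3 x - 0) x"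
      using J[OF x] has_jet_at_slope_gap_map[OF x] has_jet_at_diff by blast
    show "\<bar>h x - slope_gap_map b s x\<bar> \<le> \<epsilon>"
      using dist_slope_gap_map[OF gap C3 _ x, of s] s assms(3) by simp
    show "jet_bounded_at (\<lambda>x. D1 x - s, \<lambda>x. D2 x - 0, \<lambda>x. D3 x - 0) x \<epsilon> \<epsilon> \<epsilon>"
      using J[OF x] s assms(3-5) by auto
  qed
  moreover have "affine_gap_map b (slope_gap_map b s)"
    using affine_gap_map_slope_gap_map gap_mapD(1,2)[OF gap] s by blast
  ultimately show ?thesis by (auto simp: m)
qed

section \<open>Decay of the bounds along the renormalization orbit\<close>

lemma square_times_power_bounded:
  fixes \<nu> :: real
  assumes "0 < \<nu>" "\<nu> < 1"
  obtains C where "\<forall>m\<ge>2. real m ^ 2 * \<nu> ^ (m - 1) \<le> C"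
proof -
  have "(\<lambda>m. real m * sqrt \<nu> ^ m) \<longlonglongrightarrow> 0"
    by (rule powser_times_n_limit_0) (use assms in simp)
  moreover have "(real m * sqrt \<nu> ^ m)\<^sup>2 = real m ^ 2 * \<nu> ^ m" for m
    using assms by (simp add: power_mult_distrib power_mult[symmetric] mult.commute[of m 2] power_mult)
  ultimately have "(\<lambda>m. real m ^ 2 * \<nu> ^ m) \<longlonglongrightarrow> 0"
    using tendsto_power[of _ 0 sequentially 2] by fastforce
  then have "Bseq (\<lambda>m. real m ^ 2 * \<nu> ^ m)" by (intro convergent_imp_Bseq convergentI)
  then obtain B where B: "\<And>m. norm (real m ^ 2 * \<nu> ^ m) \<le> B" unfolding Bseq_def by blast
  have "real m ^ 2 * \<nu> ^ (m - 1) \<le> B / \<nu>" if "2 \<le> m" for m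
  proof -
    have "real m ^ 2 * \<nu> ^ (m - 1) = real m ^ 2 * \<nu> ^ m / \<nu>"
      using that assms by (cases m) auto
    also have "\<dots> \<le> B / \<nu>" using B[of m] assms by (intro divide_right_mono) auto
    finally show ?thesis .
  qed
  then show ?thesis using that by blast
qed

lemma square_times_power_le:
  fixes \<nu> :: real
  assumes "0 \<le> \<nu>" "\<nu> \<le> 1/4" "2 \<le> m"
  shows "real m ^ 2 * \<nu> ^ (m - 1) \<le> 4 * \<nu>"
proof -
  define j where "j = m - 2"
  have mj: "m = j + 2" "m - 1 = Suc j" using assms(3) by (auto simp: j_def)
  have "(j + 2) ^ 2 \<le> 4 * (4::nat) ^ j"
  proof (induction j)
    case (Suc j)
    have "(Suc j + 2) ^ 2 \<le> 4 * (j + 2) ^ 2" by (simp add: power2_eq_square)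
    with Suc show ?case by simp
  qed (simp add: power2_eq_square)
  then have "real ((j + 2) ^ 2) \<le> real (4 * 4 ^ j)" by (simp only: of_nat_le_iff)
  then have "real m ^ 2 \<le> 4 * 4 ^ j" unfolding mj by simp
  moreover have "\<nu> ^ j \<le> (1/4) ^ j" using assms by (intro power_mono) auto
  ultimately have "real m ^ 2 * \<nu> ^ j \<le> (4 * 4 ^ j) * (1/4) ^ j"
    using assms by (intro mult_mono) auto
  also have "\<dots> = 4" by (simp add: power_one_over)
  finally have "\<nu> * (real m ^ 2 * \<nu> ^ j) \<le> \<nu> * 4" using assms by (intro mult_left_mono) auto
  then show ?thesis unfolding mj(2) by (simp add: ac_simps)
qed

lemma bounded_gap_map_renorm_iterates:
  assumes "bounded_gap_map m \<nu> M K" "0 < \<nu>" "\<nu> < 1" "0 \<le> M" "0 \<le> K"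
    and "\<And>n. renormalizable ((renorm ^^ n) m)"
  shows "\<exists>M K. 0 \<le> M \<and> 0 \<le> K \<and> bounded_gap_map ((renorm ^^ n) m) (\<nu> ^ 2 ^ n) M K"
proof (induction n)
  case 0
  show ?case using assms(1,4,5) by auto
next
  case (Suc n)
  then obtain M' K' where MK: "0 \<le> M'" "0 \<le> K'" "bounded_gap_map ((renorm ^^ n) m) (\<nu> ^ 2 ^ n) M' K'"
    by blast
  have v: "0 < \<nu> ^ 2 ^ n" "\<nu> ^ 2 ^ n < 1" using assms(2,3) by (simp_all add: power_less_one_iff)
  then obtain C where C: "\<forall>m\<ge>2. real m ^ 2 * (\<nu> ^ 2 ^ n) ^ (m - 1) \<le> C"
    by (rule square_times_power_bounded)
  have "0 \<le> C" using C[rule_format, of 2] v by (simp add: order_trans[rotated])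
  moreover have "(\<nu> ^ 2 ^ n)\<^sup>2 = \<nu> ^ 2 ^ Suc n" by (simp add: power_mult[symmetric] mult.commute)
  then have "bounded_gap_map ((renorm ^^ Suc n) m) (\<nu> ^ 2 ^ Suc n) (M' * C) ((K' + 3 * M'\<^sup>2) * C)"
    using bounded_gap_map_renorm[OF MK(3) _ _ MK(1,2) C assms(6)] v by simp
  ultimately show ?case using MK(1,2) by (intro exI[of _ "M' * C"] exI[of _ "(K' + 3 * M'\<^sup>2) * C"]) auto
qed

lemma bounded_gap_map_renorm_iterates_decay:
  assumes "bounded_gap_map m \<nu> M K" "0 \<le> \<nu>" "\<nu> \<le> 1/16" "0 \<le> M" "0 \<le> K"
    and "\<And>n. renormalizable ((renorm ^^ n) m)"
  shows "bounded_gap_map ((renorm ^^ j) m) (\<nu> ^ 2 ^ j) (M / 4 ^ j) ((K + 3 * M\<^sup>2) / 2 ^ j)"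
proof (induction j)
  case 0
  show ?case
    using assms(1) C3_bounded_on_mono[of "branch_interiors (fst m)" "snd m" \<nu> M K M "K + 3 * M\<^sup>2"]
    by (simp add: bounded_gap_map_def)
next
  case (Suc j)
  define v where "v = \<nu> ^ 2 ^ j"
  have v: "0 \<le> v" "v \<le> 1/16"
    using assms(2,3) power_decreasing[of 1 "2 ^ j" \<nu>] by (auto simp: v_def)
  have "bounded_gap_map ((renorm ^^ Suc j) m) (v\<^sup>2) (M / 4 ^ j * (4 * v))
      (((K + 3 * M\<^sup>2) / 2 ^ j + 3 * (M / 4 ^ j)\<^sup>2) * (4 * v))"
    using bounded_gap_map_renorm[OF Suc.IH[folded v_def]] square_times_power_le[of v] v assms(4,5,6)
    by simp
  moreover have "M / 4 ^ j * (4 * v) \<le> M / 4 ^ Suc j"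
    using v assms(4) mult_left_mono[of "4 * v" "1/4" "M / 4 ^ j"] by simp
  moreover have "((K + 3 * M\<^sup>2) / 2 ^ j + 3 * (M / 4 ^ j)\<^sup>2) * (4 * v) \<le> (K + 3 * M\<^sup>2) / 2 ^ Suc j"
  proof -
    define W where "W = (K + 3 * M\<^sup>2) / 2 ^ j"
    have "((4::real) ^ j)\<^sup>2 = (4\<^sup>2) ^ j" by (simp only: power_mult[symmetric] mult.commute)
    then have "3 * (M / 4 ^ j)\<^sup>2 = 3 * M\<^sup>2 / 16 ^ j" by (simp add: power_divide)
    also have "\<dots> \<le> W"
      unfolding W_def using assms(5) by (intro frac_le) (auto intro: power_mono)
    moreover have "0 \<le> W" unfolding W_def using assms(4,5) by simp
    ultimately have "(W + 3 * (M / 4 ^ j)\<^sup>2) * (4 * v) \<le> (2 * W) * (1 / 4)"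
      using v by (intro mult_mono) auto
    moreover have "2 * W * (1 / 4) = (K + 3 * M\<^sup>2) / 2 ^ Suc j" unfolding W_def by (simp add: field_simps)
    ultimately show ?thesis unfolding W_def by simp
  qed
  moreover have "v\<^sup>2 = \<nu> ^ 2 ^ Suc j" by (simp add: v_def power_mult[symmetric] mult.commute)
  ultimately show ?case
    unfolding bounded_gap_map_def using C3_bounded_on_mono by auto
qed

lemma power_two_power_tendsto_zero:
  fixes \<nu> :: real
  assumes "0 \<le> \<nu>" "\<nu> < 1"
  shows "(\<lambda>n. \<nu> ^ 2 ^ n) \<longlonglongrightarrow> 0"
proof (rule Lim_null_comparison)
  have "\<nu> ^ 2 ^ n \<le> \<nu> ^ n" for n
    using assms by (intro power_decreasing less_imp_le[OF less_exp]) auto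
  then show "\<forall>\<^sub>F n in sequentially. norm (\<nu> ^ 2 ^ n) \<le> \<nu> ^ n"
    using assms(1) by (simp add: always_eventually)
  show "(\<lambda>n. \<nu> ^ n) \<longlonglongrightarrow> 0" using assms by (intro LIMSEQ_realpow_zero)
qed

lemma renorm_iterates_bounds_tendsto_zero:
  assumes "dissipative_gap_map b f" "C3_gap_map b f" "infinitely_renormalizable b f"
  obtains \<nu> M K :: "nat \<Rightarrow> real"
  where "\<forall>\<^sub>F n in sequentially. bounded_gap_map ((renorm ^^ n) (b, f)) (\<nu> n) (M n) (K n)"
    and "\<nu> \<longlonglongrightarrow> 0" "M \<longlonglongrightarrow> 0" "K \<longlonglongrightarrow> 0"
proof -
  obtain \<nu> M K where \<nu>: "0 < \<nu>" "\<nu> < 1" and MK: "0 \<le> M" "0 \<le> K"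
    and init: "bounded_gap_map (b, f) \<nu> M K"
    using bounded_gap_map_initial[OF assms(1,2)] by blast
  have ren: "\<And>n. renormalizable ((renorm ^^ n) (b, f))"
    using assms(3) unfolding infinitely_renormalizable_def by blast
  have "(\<lambda>n. \<nu> ^ 2 ^ n) \<longlonglongrightarrow> 0" using \<nu> by (intro power_two_power_tendsto_zero) auto
  from order_tendstoD(2)[OF this, of "1/16"] have "\<forall>\<^sub>F n in sequentially. \<nu> ^ 2 ^ n < 1/16" by simp
  then obtain N where N: "\<nu> ^ 2 ^ N \<le> 1/16"
    unfolding eventually_sequentially by (meson less_imp_le order_refl)
  obtain M' K' where MK': "0 \<le> M'" "0 \<le> K'" and "bounded_gap_map ((renorm ^^ N) (b, f)) (\<nu> ^ 2 ^ N) M' K'"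
    using bounded_gap_map_renorm_iterates[OF init \<nu> MK ren] by blast
  have shift: "(renorm ^^ j) ((renorm ^^ N) (b, f)) = (renorm ^^ (j + N)) (b, f)" for j
    by (simp add: funpow_add)
  have "bounded_gap_map ((renorm ^^ j) ((renorm ^^ N) (b, f))) ((\<nu> ^ 2 ^ N) ^ 2 ^ j)
      (M' / 4 ^ j) ((K' + 3 * M'\<^sup>2) / 2 ^ j)" for j
    using \<nu> ren by (intro bounded_gap_map_renorm_iterates_decay[OF \<open>bounded_gap_map _ _ M' K'\<close> _ N MK'])
      (simp_all add: shift)
  moreover have "(\<nu> ^ 2 ^ N) ^ 2 ^ j = \<nu> ^ 2 ^ (j + N)" for j
    by (simp add: power_mult[symmetric] power_add mult.commute)
  moreover have "M' / 4 ^ j = M' * 4 ^ N / 4 ^ (j + N)" "(K' + 3 * M'\<^sup>2) / 2 ^ j = (K' + 3 * M'\<^sup>2) * 2 ^ N / 2 ^ (j + N)"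
    for j by (simp_all add: power_add)
  ultimately have decay: "bounded_gap_map ((renorm ^^ (j + N)) (b, f)) (\<nu> ^ 2 ^ (j + N))
      (M' * 4 ^ N / 4 ^ (j + N)) ((K' + 3 * M'\<^sup>2) * 2 ^ N / 2 ^ (j + N))" for j
    by (simp only: shift)
  show ?thesis
  proof (rule that)
    show "\<forall>\<^sub>F n in sequentially. bounded_gap_map ((renorm ^^ n) (b, f)) (\<nu> ^ 2 ^ n)
        (M' * 4 ^ N / 4 ^ n) ((K' + 3 * M'\<^sup>2) * 2 ^ N / 2 ^ n)"
      unfolding eventually_sequentially using decay by (metis le_add_diff_inverse2)
  qed (fact, auto intro: LIMSEQ_divide_realpow_zero)
qed

theorem mainTheorem4:
  fixes b :: real and f :: "real \<Rightarrow> real"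
  assumes "dissipative_gap_map b f"
    and "C3_gap_map b f"
    and "infinitely_renormalizable b f"
  shows "\<forall>\<epsilon>>0. \<exists>n0::nat. \<forall>n\<ge>n0. \<exists>g.
           affine_gap_map (fst ((renorm ^^ n) (b, f))) g \<and>
           C3_norm (fst ((renorm ^^ n) (b, f)))
             (\<lambda>x. snd ((renorm ^^ n) (b, f)) x - g x) \<le> ereal \<epsilon>"
proof (intro allI impI)
  fix \<epsilon> :: real
  assume "0 < \<epsilon>"
  obtain \<nu> M K where "\<forall>\<^sub>F n in sequentially. bounded_gap_map ((renorm ^^ n) (b, f)) (\<nu> n) (M n) (K n)"
    and "\<nu> \<longlonglongrightarrow> 0" "M \<longlonglongrightarrow> 0" "K \<longlonglongrightarrow> 0"
    using renorm_iterates_bounds_tendsto_zero[OF assms] by blast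
  then have "\<forall>\<^sub>F n in sequentially. bounded_gap_map ((renorm ^^ n) (b, f)) (\<nu> n) (M n) (K n) \<and>
      \<nu> n < \<epsilon> / 2 \<and> M n < \<epsilon> \<and> K n < \<epsilon>"
    using \<open>0 < \<epsilon>\<close> by (intro eventually_conj order_tendstoD(2)) auto
  then obtain n0 where "\<forall>n\<ge>n0. bounded_gap_map ((renorm ^^ n) (b, f)) (\<nu> n) (M n) (K n) \<and>
      \<nu> n < \<epsilon> / 2 \<and> M n < \<epsilon> \<and> K n < \<epsilon>"
    unfolding eventually_sequentially by blast
  then show "\<exists>n0. \<forall>n\<ge>n0. \<exists>g. affine_gap_map (fst ((renorm ^^ n) (b, f))) g \<and>
      C3_norm (fst ((renorm ^^ n) (b, f))) (\<lambda>x. snd ((renorm ^^ n) (b, f)) x - g x) \<le> ereal \<epsilon>"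
    using affine_approximation \<open>0 < \<epsilon>\<close> by (meson less_imp_le)
qed

end
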